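(* Fix generic values of the parameters $h_1,h_2,u_1,\dots,u_8$, of $z$, and of the three numbers $Y(z/q),Y(z),Y(qz)$. Put $$F(f,g)=\varphi(f,g)\,\{f-f(z/q)\}\{f-f(z)\}\,L_1 ,$$ regarded as a function of $(f,g)$, with $L_1$ as in the context. Then $F$ is a polynomial in $(f,g)$ and the algebraic curve $F=0$ in $\mathbb{P}^1\times\mathbb{P}^1$ has the following properties: (i) it is of bidegree $(3,2)$ in $(f,g)$; (ii) it passes through the 12 points $P_1,\dots,P_8$, $P(z)$, $P(h_1q/z)$, $Q(z)$, $Q(z/q)$. Here $Q(u)=(f,g)$ denotes the point with $f=f(u)$ and $g$ determined by $\dfrac{g-g(u)}{g-g(h_1/u)}=\dfrac{Y(qu)}{Y(u)}$, for $u=z$ and $u=z/q$. Moreover, these two conditions determine the curve $F=0$ uniquely.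
   Context: Let $h_1,h_2,u_1,\dots,u_8$ be generic nonzero complex parameters and $q=h_1^2h_2^2/(u_1\cdots u_8)$. Put $f(u)=u+h_1/u$, $g(u)=u+h_2/u$, $\bar f(u)=u+\frac{h_1}{qu}$, $\bar g(u)=u+\frac{h_2q}{u}$, $P(u)=(f(u),g(u))\in\mathbb{P}^1\times\mathbb{P}^1$ and $P_i=P(u_i)$. Let $\varphi(f,g)=(f-g)\big(\frac{f}{h_1}-\frac{g}{h_2}\big)-(h_1-h_2)\big(\frac1{h_1}-\frac1{h_2}\big)$. Let $U(z)=\prod_{i=1}^8(z-u_i)=\sum_{i=0}^8(-1)^i m_{8-i}z^i$ (so $m_0=1$, $m_8=h_1^2h_2^2/q$). For a parameter $h$ define polynomials in $g$: $P_n(h,g)=m_0g^4-m_1g^3+(m_2-3hm_0-h^{-3}m_8)g^2+(2hm_1-m_3+h^{-2}m_7)g+(h^2m_0-hm_2+m_4-h^{-1}m_6+h^{-2}m_8)$, $P_d(h,g)=m_8g^4-hm_7g^3+(h^2m_6-3hm_8-h^5m_0)g^2+(2h^2m_7-h^3m_5+h^5m_1)g+(h^6m_0-h^5m_2+h^4m_4-h^3m_6+h^2m_8)$. (They satisfy $(z-\frac hz)P_n(h,z+\frac hz)=z^{-3}U(z)-(z/h)^3U(h/z)$ and $(z-\frac hz)P_d(h,z+\frac hz)=z^5U(h/z)-(h/z)^5U(z)$.) Define, for variables $f_0,f,g$, $V(f_0,f)=q\Big[(f_0-g)(f-g)-\big(\tfrac{h_1}{q}-h_2\big)(h_1-h_2)\tfrac1{h_2}\Big]P_d(h_2,g)-h_1^2h_2^4\Big[\big(\tfrac{f_0q}{h_1}-\tfrac{g}{h_2}\big)\big(\tfrac{f}{h_1}-\tfrac{g}{h_2}\big)-\big(\tfrac{q}{h_1}-\tfrac1{h_2}\big)\big(\tfrac1{h_1}-\tfrac1{h_2}\big)h_2\Big]P_n(h_2,g)$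 (it also depends on $g$). For a function $Y$ of $z$ and variables $(f,g)$ define $$L_1=\frac{q^5U(\frac zq)}{(z^2-h_1q^2)\{f-f(\frac zq)\}}\Big[Y(\tfrac zq)-\frac{g-g(\frac{h_1q}{z})}{g-g(\frac zq)}Y(z)\Big]+\frac{z^8U(\frac{h_1}{z})}{(z^2-h_1)h_1^4\{f-f(z)\}}\Big[Y(qz)-\frac{g-g(z)}{g-g(\frac{h_1}{z})}Y(z)\Big]+\frac{(h_1-h_2)z^2(z^2-h_1q)\,V(\bar f(\frac zq),f)}{h_1^3h_2^3q\,g\,\varphi(f,g)\{g-g(\frac{h_1}{z})\}\{g-g(\frac zq)\}}Y(z).$$ *)

theory Defs
  imports Complex_Main "HOL-Computational_Algebra.Polynomial"
begin

text \<open>Parameters: h1, h2 and u 1, ..., u 8 (the values u i for other i are irrelevant).\<close>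

definition qpar :: "complex \<Rightarrow> complex \<Rightarrow> (nat \<Rightarrow> complex) \<Rightarrow> complex" where
  "qpar h1 h2 u = h1^2 * h2^2 / (\<Prod>i\<in>{1..8}. u i)"

definition fP :: "complex \<Rightarrow> complex \<Rightarrow> complex" where
  "fP h1 x = x + h1 / x"

definition gP :: "complex \<Rightarrow> complex \<Rightarrow> complex" where
  "gP h2 x = x + h2 / x"

definition fbar :: "complex \<Rightarrow> complex \<Rightarrow> complex \<Rightarrow> complex" where
  "fbar h1 q x = x + h1 / (q * x)"

definition phi :: "complex \<Rightarrow> complex \<Rightarrow> complex \<Rightarrow> complex \<Rightarrow> complex" where
  "phi h1 h2 f g = (f - g) * (f / h1 - g / h2) - (h1 - h2) * (1 / h1 - 1 / h2)"

text \<open>U(z) = prod_{i=1}^8 (z - u_i) = sum_i (-1)^i m_{8-i} z^i.\<close>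
definition Upol :: "(nat \<Rightarrow> complex) \<Rightarrow> complex poly" where
  "Upol u = (\<Prod>i\<in>{1..8}. [:- u i, 1:])"

definition Uf :: "(nat \<Rightarrow> complex) \<Rightarrow> complex \<Rightarrow> complex" where
  "Uf u w = poly (Upol u) w"

definition msym :: "(nat \<Rightarrow> complex) \<Rightarrow> nat \<Rightarrow> complex" where
  "msym u k = (-1) ^ (8 - k) * coeff (Upol u) (8 - k)"

definition Pn :: "(nat \<Rightarrow> complex) \<Rightarrow> complex \<Rightarrow> complex \<Rightarrow> complex" where
  "Pn m h g = m 0 * g^4 - m 1 * g^3
     + (m 2 - 3 * h * m 0 - m 8 / h^3) * g^2
     + (2 * h * m 1 - m 3 + m 7 / h^2) * g
     + (h^2 * m 0 - h * m 2 + m 4 - m 6 / h + m 8 / h^2)"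

definition Pd :: "(nat \<Rightarrow> complex) \<Rightarrow> complex \<Rightarrow> complex \<Rightarrow> complex" where
  "Pd m h g = m 8 * g^4 - h * m 7 * g^3
     + (h^2 * m 6 - 3 * h * m 8 - h^5 * m 0) * g^2
     + (2 * h^2 * m 7 - h^3 * m 5 + h^5 * m 1) * g
     + (h^6 * m 0 - h^5 * m 2 + h^4 * m 4 - h^3 * m 6 + h^2 * m 8)"

definition Vfun :: "complex \<Rightarrow> complex \<Rightarrow> (nat \<Rightarrow> complex) \<Rightarrow> complex \<Rightarrow> complex \<Rightarrow> complex \<Rightarrow> complex" where
  "Vfun h1 h2 u f0 f g =
    (let q = qpar h1 h2 u; m = msym u in
     q * ((f0 - g) * (f - g) - (h1 / q - h2) * (h1 - h2) * (1 / h2)) * Pd m h2 g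
     - h1^2 * h2^4 * ((f0 * q / h1 - g / h2) * (f / h1 - g / h2)
                      - (q / h1 - 1 / h2) * (1 / h1 - 1 / h2) * h2) * Pn m h2 g)"

text \<open>L_1, where y0 = Y(z/q), y1 = Y(z), y2 = Y(qz).\<close>
definition L1 :: "complex \<Rightarrow> complex \<Rightarrow> (nat \<Rightarrow> complex) \<Rightarrow> complex \<Rightarrow> complex \<Rightarrow> complex \<Rightarrow> complex
    \<Rightarrow> complex \<Rightarrow> complex \<Rightarrow> complex" where
  "L1 h1 h2 u z y0 y1 y2 f g =
    (let q = qpar h1 h2 u in
     q^5 * Uf u (z / q) / ((z^2 - h1 * q^2) * (f - fP h1 (z / q)))
       * (y0 - (g - gP h2 (h1 * q / z)) / (g - gP h2 (z / q)) * y1)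
     + z^8 * Uf u (h1 / z) / ((z^2 - h1) * h1^4 * (f - fP h1 z))
       * (y2 - (g - gP h2 z) / (g - gP h2 (h1 / z)) * y1)
     + (h1 - h2) * z^2 * (z^2 - h1 * q) * Vfun h1 h2 u (fbar h1 q (z / q)) f g
       / (h1^3 * h2^3 * q * g * phi h1 h2 f g * (g - gP h2 (h1 / z)) * (g - gP h2 (z / q)))
       * y1)"

definition Fcurve :: "complex \<Rightarrow> complex \<Rightarrow> (nat \<Rightarrow> complex) \<Rightarrow> complex \<Rightarrow> complex \<Rightarrow> complex \<Rightarrow> complex
    \<Rightarrow> complex \<Rightarrow> complex \<Rightarrow> complex" where
  "Fcurve h1 h2 u z y0 y1 y2 f g =
    phi h1 h2 f g * (f - fP h1 (z / qpar h1 h2 u)) * (f - fP h1 z) * L1 h1 h2 u z y0 y1 y2 f g"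

definition bipoly :: "(nat \<Rightarrow> nat \<Rightarrow> complex) \<Rightarrow> complex \<Rightarrow> complex \<Rightarrow> complex" where
  "bipoly c f g = (\<Sum>i\<le>3. \<Sum>j\<le>2. c i j * f^i * g^j)"

definition in_box32 :: "(nat \<Rightarrow> nat \<Rightarrow> complex) \<Rightarrow> bool" where
  "in_box32 c \<longleftrightarrow> (\<forall>i j. 3 < i \<or> 2 < j \<longrightarrow> c i j = 0)"

definition through12 :: "complex \<Rightarrow> complex \<Rightarrow> (nat \<Rightarrow> complex) \<Rightarrow> complex \<Rightarrow> complex \<Rightarrow> complex \<Rightarrow> complex
    \<Rightarrow> (nat \<Rightarrow> nat \<Rightarrow> complex) \<Rightarrow> bool" where
  "through12 h1 h2 u z y0 y1 y2 c \<longleftrightarrow>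
    (let q = qpar h1 h2 u in
     (\<forall>i\<in>{1..8}. bipoly c (fP h1 (u i)) (gP h2 (u i)) = 0)
     \<and> bipoly c (fP h1 z) (gP h2 z) = 0
     \<and> bipoly c (fP h1 (h1 * q / z)) (gP h2 (h1 * q / z)) = 0
     \<and> (\<forall>g. (g - gP h2 z) / (g - gP h2 (h1 / z)) = y2 / y1
            \<longrightarrow> bipoly c (fP h1 z) g = 0)
     \<and> (\<forall>g. (g - gP h2 (z / q)) / (g - gP h2 (h1 / (z / q))) = y1 / y0
            \<longrightarrow> bipoly c (fP h1 (z / q)) g = 0))"

text \<open>Polynomial functions of the first n coordinates (used to express genericity:
  a property holds generically if it holds outside the zero set of a polynomial
  function that is not identically zero).\<close>
inductive polyfun :: "nat \<Rightarrow> ((nat \<Rightarrow> complex) \<Rightarrow> complex) \<Rightarrow> bool" for n where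
  pf_const: "polyfun n (\<lambda>x. c)"
| pf_var: "i < n \<Longrightarrow> polyfun n (\<lambda>x. x i)"
| pf_add: "polyfun n p \<Longrightarrow> polyfun n r \<Longrightarrow> polyfun n (\<lambda>x. p x + r x)"
| pf_mult: "polyfun n p \<Longrightarrow> polyfun n r \<Longrightarrow> polyfun n (\<lambda>x. p x * r x)"

definition param_vec :: "complex \<Rightarrow> complex \<Rightarrow> (nat \<Rightarrow> complex) \<Rightarrow> complex \<Rightarrow> complex \<Rightarrow> complex \<Rightarrow> complex
    \<Rightarrow> nat \<Rightarrow> complex" where
  "param_vec h1 h2 u z y0 y1 y2 i =
    (if i = 0 then h1 else if i = 1 then h2 else if i \<le> 9 then u (i - 1)
     else if i = 10 then z else if i = 11 then y0 else if i = 12 then y1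
     else if i = 13 then y2 else 0)"

end

theory Submission
  imports Defs
begin

(* 1. Bivariate polynomials are modelled as complex poly poly with a bidegree bound; the
      (3,2)-coefficient grid of such a polynomial is read off and evaluated via bipoly.
   2. After clearing denominators, phi (f-a)(f-b) L1 = y0 A phi (f-b) + y2 B phi (f-a)
      + y1 N/(g (g-al)(g-be)), where N is a polynomial of bidegree (3,5).  Using the
      functional identities of Pn, Pd and the parametrisation t -> (t+h1/t, t+h2/t) of the
      conic phi = 0, N vanishes on the lines g = 0, g = al, g = be; hence it is divisible by
      g (g-al) (g-be), which yields the polynomial c of bidegree (3,2), with c 3 2 <> 0.
   3. Each of the twelve point conditions is then checked directly.
   4. Uniqueness: for another curve d through the twelve points, e = d - s c with e 3 2 = 0
      vanishes at ten points of the rational conic phi = 0, hence on the whole conic (degree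
      count); so e = h2 E2(f) phi(f,g), E2 is linear, and the two Q-points force E2 = 0.
   5. All nondegeneracy assumptions used are collected in a locale; they hold outside the
      zero set of one explicit nonzero polynomial D in the 14 parameters. *)

section \<open>Bivariate polynomials\<close>

text \<open>A polynomial in (f,g) is a polynomial in f whose coefficients are polynomials in g.\<close>
type_synonym bpoly = "complex poly poly"

definition beval :: "bpoly \<Rightarrow> complex \<Rightarrow> complex \<Rightarrow> complex" where
  "beval P f g = poly (poly P [:f:]) g"

definition FV :: bpoly where "FV = [:0, 1:]"
definition GV :: bpoly where "GV = [:[:0, 1:]:]"
definition CC :: "complex \<Rightarrow> bpoly" where "CC k = [:[:k:]:]"

lemma beval_add[simp]: "beval (P + Q) f g = beval P f g + beval Q f g" by (simp add: beval_def)
lemma beval_diff[simp]: "beval (P - Q) f g = beval P f g - beval Q f g" by (simp add: beval_def)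
lemma beval_mult[simp]: "beval (P * Q) f g = beval P f g * beval Q f g" by (simp add: beval_def)
lemma beval_pow[simp]: "beval (P ^ n) f g = beval P f g ^ n" by (induct n) (simp_all add: beval_def)
lemma beval_FV[simp]: "beval FV f g = f" by (simp add: beval_def FV_def)
lemma beval_GV[simp]: "beval GV f g = g" by (simp add: beval_def GV_def)
lemma beval_CC[simp]: "beval (CC k) f g = k" by (simp add: beval_def CC_def)

definition bideg_le :: "bpoly \<Rightarrow> nat \<Rightarrow> nat \<Rightarrow> bool" where
  "bideg_le P a b \<longleftrightarrow> degree P \<le> a \<and> (\<forall>i. degree (coeff P i) \<le> b)"

lemma bideg_le_add: "bideg_le P a b \<Longrightarrow> bideg_le Q a b \<Longrightarrow> bideg_le (P + Q) a b"
  unfolding bideg_le_def by (auto intro: order.trans[OF degree_add_le])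
lemma bideg_le_diff: "bideg_le P a b \<Longrightarrow> bideg_le Q a b \<Longrightarrow> bideg_le (P - Q) a b"
  unfolding bideg_le_def by (auto intro: order.trans[OF degree_diff_le])
lemma bideg_le_mono: "bideg_le P a b \<Longrightarrow> a \<le> a' \<Longrightarrow> b \<le> b' \<Longrightarrow> bideg_le P a' b'"
  unfolding bideg_le_def by (meson order.trans)
lemma bideg_le_mult: "bideg_le P a b \<Longrightarrow> bideg_le Q c d \<Longrightarrow> bideg_le (P * Q) (a + c) (b + d)"
  unfolding bideg_le_def
proof (intro conjI allI)
  assume A: "degree P \<le> a \<and> (\<forall>i. degree (coeff P i) \<le> b)"
     and B: "degree Q \<le> c \<and> (\<forall>i. degree (coeff Q i) \<le> d)"
  show "degree (P * Q) \<le> a + c"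
    using A B by (meson add_mono degree_mult_le order.trans)
  fix n
  show "degree (coeff (P * Q) n) \<le> b + d"
    unfolding coeff_mult
    by (rule degree_sum_le) (use A B in \<open>auto intro: order.trans[OF degree_mult_le] add_mono\<close>)
qed
lemma bideg_le_FV: "1 \<le> a \<Longrightarrow> bideg_le FV a b"
  by (simp add: bideg_le_def FV_def coeff_pCons split: nat.split)
lemma bideg_le_CC: "bideg_le (CC k) a b"
  by (simp add: bideg_le_def CC_def coeff_pCons split: nat.split)
lemma bideg_le_CCmult: "bideg_le Q a b \<Longrightarrow> bideg_le (CC k * Q) a b"
  using bideg_le_mult[of "CC k" 0 0 Q a b] bideg_le_CC by simp
lemma bideg_le_FVc: "bideg_le (FV - CC c) 1 0"
  by (intro bideg_le_diff bideg_le_FV bideg_le_CC) simp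

lemma GV_pow: "GV ^ n = [:monom 1 n:]"
proof (induct n)
  case 0 then show ?case by (simp add: one_pCons monom_0 one_poly_def)
next
  case (Suc n)
  have x: "[:0,1:] = (monom 1 1 :: complex poly)" by (simp add: monom_Suc monom_0)
  have "GV ^ Suc n = [:[:0,1:] * monom 1 n:]" using Suc by (simp add: GV_def)
  also have "\<dots> = [:monom 1 (Suc n):]" unfolding x mult_monom by simp
  finally show ?case .
qed
lemma bideg_le_GVpow: "n \<le> b \<Longrightarrow> bideg_le (GV^n) a b"
  unfolding GV_pow bideg_le_def by (auto simp: coeff_pCons degree_monom_eq split: nat.split)
lemma bideg_le_GV: "1 \<le> b \<Longrightarrow> bideg_le GV a b"
  using bideg_le_GVpow[of 1 b a] by simp

lemmas bideg_leI = bideg_le_add bideg_le_diff bideg_le_mult bideg_le_CCmult bideg_le_FV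
  bideg_le_GV bideg_le_CC bideg_le_GVpow

lemma coeff_CC_mult[simp]: "coeff (coeff (CC k * Q) i) j = k * coeff (coeff Q i) j"
  by (simp add: CC_def)
lemma bideg_le_coeff_in: "bideg_le P a b \<Longrightarrow> b < j \<Longrightarrow> coeff (coeff P i) j = 0"
  unfolding bideg_le_def by (meson coeff_eq_0 le_less_trans)

lemma coeff_mult_top:
  fixes p q :: "'a::comm_semiring_0 poly"
  assumes "degree p \<le> a" "degree q \<le> c"
  shows "coeff (p * q) (a + c) = coeff p a * coeff q c"
proof -
  have "coeff (p * q) (a + c) = (\<Sum>i\<le>a + c. coeff p i * coeff q (a + c - i))"
    by (rule coeff_mult)
  also have "\<dots> = (\<Sum>i\<le>a + c. if i = a then coeff p a * coeff q c else 0)"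
  proof (rule sum.cong[OF refl])
    fix i assume "i \<in> {..a+c}"
    show "coeff p i * coeff q (a + c - i) = (if i = a then coeff p a * coeff q c else 0)"
    proof (cases "i < a")
      case True
      then have "degree q < a + c - i" using assms by linarith
      then show ?thesis using True by (simp add: coeff_eq_0)
    next
      case False
      then have "i = a \<or> degree p < i" using assms by linarith
      then show ?thesis by (auto simp: coeff_eq_0)
    qed
  qed
  also have "\<dots> = coeff p a * coeff q c" by simp
  finally show ?thesis .
qed

lemma top_mult:
  "bideg_le P a b \<Longrightarrow> bideg_le Q c d \<Longrightarrow> n = a + c \<Longrightarrow> k = b + d \<Longrightarrow>
   coeff (coeff (P * Q) n) k = coeff (coeff P a) b * coeff (coeff Q c) d"
  unfolding bideg_le_def by (simp add: coeff_mult_top)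

lemma beval_root_coeff:
  assumes "\<forall>f. beval P f r = 0"
  shows "poly (coeff P i) r = 0"
proof -
  have ev: "beval P f r = poly (map_poly (\<lambda>p. poly p r) P) f" for f
    unfolding beval_def by (induct P) (simp_all add: map_poly_pCons)
  have "map_poly (\<lambda>p. poly p r) P = 0"
    using assms by (simp add: ev poly_all_0_iff_0[symmetric])
  then have "coeff (map_poly (\<lambda>p. poly p r) P) i = 0" by simp
  then show ?thesis by (simp add: coeff_map_poly)
qed

lemma three_roots_dvd:
  fixes p :: "complex poly"
  assumes "poly p r1 = 0" "poly p r2 = 0" "poly p r3 = 0"
    "r1 \<noteq> r2" "r1 \<noteq> r3" "r2 \<noteq> r3"
  shows "[:-r1,1:] * [:-r2,1:] * [:-r3,1:] dvd p"
proof -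
  obtain p1 where p1: "p = [:-r1,1:] * p1" using assms(1) by (auto simp: poly_eq_0_iff_dvd)
  have "poly p1 r2 = 0" "poly p1 r3 = 0" using assms p1 by auto
  then obtain p2 where p2: "p1 = [:-r2,1:] * p2" by (auto simp: poly_eq_0_iff_dvd)
  have "poly p2 r3 = 0" using \<open>poly p1 r3 = 0\<close> assms p2 by auto
  then obtain p3 where p3: "p2 = [:-r3,1:] * p3" by (auto simp: poly_eq_0_iff_dvd)
  have "p = ([:-r1,1:] * [:-r2,1:] * [:-r3,1:]) * p3" using p1 p2 p3 by (simp only: mult.assoc)
  then show ?thesis by (rule dvdI)
qed

lemma poly_le_sum:
  fixes p :: "'a::comm_semiring_1 poly"
  assumes "degree p \<le> n"
  shows "poly p x = (\<Sum>i\<le>n. coeff p i * x ^ i)"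
  unfolding poly_altdef
  by (rule sum.mono_neutral_left) (use assms in \<open>auto simp: coeff_eq_0\<close>)

definition coeff_grid :: "bpoly \<Rightarrow> nat \<Rightarrow> nat \<Rightarrow> complex" where
  "coeff_grid T i j = (if i \<le> 3 \<and> j \<le> 2 then coeff (coeff T i) j else 0)"

lemma in_box_coeff_grid: "in_box32 (coeff_grid T)" by (simp add: in_box32_def coeff_grid_def)

lemma bipoly_coeff_grid:
  assumes "bideg_le T 3 2"
  shows "bipoly (coeff_grid T) f g = beval T f g"
proof -
  have "beval T f g = poly (\<Sum>i\<le>3. coeff T i * [:f:] ^ i) g"
    unfolding beval_def using assms by (simp add: bideg_le_def poly_le_sum[of T 3])
  also have "\<dots> = (\<Sum>i\<le>3. poly (coeff T i) g * f ^ i)"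
    by (simp add: poly_sum)
  also have "\<dots> = (\<Sum>i\<le>3. (\<Sum>j\<le>2. coeff (coeff T i) j * g ^ j) * f ^ i)"
    using assms by (simp add: bideg_le_def poly_le_sum[of "coeff T _" 2])
  also have "\<dots> = bipoly (coeff_grid T) f g"
    unfolding bipoly_def coeff_grid_def by (simp add: sum_distrib_right sum_distrib_left mult_ac)
  finally show ?thesis by simp
qed

section \<open>The polynomial U and the functional equations of Pn and Pd\<close>

definition Ue :: "(nat \<Rightarrow> complex) \<Rightarrow> complex \<Rightarrow> complex" where
 "Ue m w = m 0*w^8 - m 1*w^7 + m 2*w^6 - m 3*w^5 + m 4*w^4 - m 5*w^3 + m 6*w^2 - m 7*w + m 8"

text \<open>The defining identities of Pn and Pd, for a general factorisation h = w v.\<close>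
lemma Pn_identity:
  fixes w v :: complex assumes "w\<noteq>0" "v\<noteq>0"
  shows "(w - v) * Pn m (w*v) (w + v) * (w^3*v^3) = Ue m w * v^3 - w^3 * Ue m v"
  using assms unfolding Pn_def Ue_def by (simp add: field_simps; algebra)

lemma Pd_identity:
  fixes w v :: complex
  shows "(w - v) * Pd m (w*v) (w + v) = w^5 * Ue m v - v^5 * Ue m w"
  unfolding Pd_def Ue_def by algebra

lemma Upol_deg: "degree (Upol u) = 8"
proof -
  have "degree (Upol u) = (\<Sum>i\<in>{1..8::nat}. degree [:- u i, 1:])"
    unfolding Upol_def by (rule degree_prod_eq_sum_degree) auto
  then show ?thesis by simp
qed

lemma Upol_lead: "coeff (Upol u) 8 = 1"
proof -
  have "lead_coeff (Upol u) = 1"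
    unfolding Upol_def lead_coeff_prod by simp
  then show ?thesis using Upol_deg[of u] by simp
qed

lemma Upol_coeff0: "coeff (Upol u) 0 = (\<Prod>i\<in>{1..8}. u i)"
proof -
  have "coeff (Upol u) 0 = poly (Upol u) 0" by (simp add: poly_0_coeff_0)
  also have "\<dots> = (\<Prod>i\<in>{1..8::nat}. - u i)" unfolding Upol_def poly_prod by simp
  also have "\<dots> = (\<Prod>i\<in>{1..8::nat}. (-1) * u i)" by simp
  also have "\<dots> = (-1)^8 * (\<Prod>i\<in>{1..8::nat}. u i)"
    by (simp only: prod.distrib prod_constant) simp
  finally show ?thesis by simp
qed

lemma msym0: "msym u 0 = 1"
  by (simp add: msym_def Upol_lead)

lemma msym8: "msym u 8 = (\<Prod>i\<in>{1..8}. u i)"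
  by (simp add: msym_def Upol_coeff0)

lemma Uf_Ue: "Uf u w = Ue (msym u) w"
proof -
  have "Uf u w = (\<Sum>i\<le>8. coeff (Upol u) i * w ^ i)"
    unfolding Uf_def by (rule poly_le_sum) (simp add: Upol_deg)
  also have "\<dots> = Ue (msym u) w"
    by (simp add: Ue_def msym_def eval_nat_numeral algebra_simps)
  finally show ?thesis .
qed

lemma Uf_root: "i \<in> {1..8} \<Longrightarrow> Uf u (u i) = 0"
  unfolding Uf_def Upol_def poly_prod by (rule prod_zero) auto

section \<open>The conic phi = 0 and the two factors of V\<close>

lemma phi_curve: "t \<noteq> 0 \<Longrightarrow> h1 \<noteq> 0 \<Longrightarrow> h2 \<noteq> 0 \<Longrightarrow> phi h1 h2 (fP h1 t) (gP h2 t) = 0"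
  unfolding phi_def fP_def gP_def by (simp add: field_simps; algebra)

lemma phi_factor_g:
  assumes "t \<noteq> 0" "h1 \<noteq> 0" "h2 \<noteq> 0"
  shows "phi h1 h2 (fP h1 t) g = (g - gP h2 t)*(g - gP h2 (h1/t))/h2"
  using assms unfolding phi_def fP_def gP_def by (simp add: field_simps; algebra)

lemma phi_factor_f:
  assumes "t \<noteq> 0" "h1 \<noteq> 0" "h2 \<noteq> 0"
  shows "phi h1 h2 f (t + h2/t) = (f - (t + h1/t)) * (f - (h2/t + h1*t/h2)) / h1"
  using assms unfolding phi_def by (simp add: field_simps; algebra)

lemma phi_expand: "phi h1 h2 f g = (1/h2)*g^2 - (f/h1 + f/h2)*g + (f^2/h1 - (h1-h2)*(1/h1-1/h2))"
  unfolding phi_def by (simp only: divide_inverse; algebra)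

text \<open>V = Xf * Pd - Yf * Pn, with the two quadratic factors Xf and Yf.\<close>
definition Xf :: "complex \<Rightarrow> complex \<Rightarrow> complex \<Rightarrow> complex \<Rightarrow> complex \<Rightarrow> complex \<Rightarrow> complex" where
  "Xf h1 h2 q f0 f g = q*((f0 - g)*(f - g) - (h1/q - h2)*(h1-h2)*(1/h2))"
definition Yf :: "complex \<Rightarrow> complex \<Rightarrow> complex \<Rightarrow> complex \<Rightarrow> complex \<Rightarrow> complex \<Rightarrow> complex" where
  "Yf h1 h2 q f0 f g = h1^2*h2^4*((f0*q/h1 - g/h2)*(f/h1 - g/h2) - (q/h1 - 1/h2)*(1/h1 - 1/h2)*h2)"

text \<open>On the conic the combination multiplying U(h2/t) in V vanishes (this gives V(P_i) = 0).\<close>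
lemma XY_on_curve:
  assumes "t \<noteq> 0" "h1 \<noteq> 0" "h2 \<noteq> 0" "q \<noteq> 0"
  shows "Xf h1 h2 q f0 (t + h1/t) (t + h2/t) * t^2 * h2^3 + Yf h1 h2 q f0 (t + h1/t) (t + h2/t) = 0"
  using assms unfolding Xf_def Yf_def by (simp add: field_simps) algebra

lemma XY_shifted:
  assumes "t \<noteq> 0" "h1 \<noteq> 0" "h2 \<noteq> 0" "q \<noteq> 0"
  shows "Xf h1 h2 q (t + h1/(q*t)) f (t + h2/t) * t^2 * h2^3 + Yf h1 h2 q (t + h1/(q*t)) f (t + h2/t) = 0"
  using assms unfolding Xf_def Yf_def by (simp add: field_simps) algebra

lemma XY_shifted_residue:
  assumes "t \<noteq> 0" "h1 \<noteq> 0" "h2 \<noteq> 0" "q \<noteq> 0"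
  shows "- Xf h1 h2 q (t + h1/(q*t)) f (t + h2/t) * (h2/t)^5 - Yf h1 h2 q (t + h1/(q*t)) f (t + h2/t) / t^3
     = (h1 - q*h2)*h2^3*(t^4 - h2^2)*(f - (h2/t + h1*t/h2))/t^6"
  using assms unfolding Xf_def Yf_def by (simp add: field_simps) algebra

text \<open>The two scalar identities showing that the residues of the three terms of L1 along
  g = g(z/q) and g = g(h1/z) cancel.\<close>
lemma residue_balance_al:
  fixes t h1 h2 q :: complex
  assumes "t \<noteq> 0" "h1 \<noteq> 0" "h2 \<noteq> 0" "q \<noteq> 0" "t^2 - h1 \<noteq> 0"
  shows "(h1-h2)*(q*t)^2*((q*t)^2-h1*q)/(h1^3*h2^3*q) * (h1 - q*h2)*h2^3*(t^4-h2^2)/t^6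
    = (t - h2/t) * q^5 * (t + h2/t) * ((t + h2/t) - (h1/(t*q) + h2*t*q/h1)) * ((t + h2/t) - (h1/t + h2*t/h1))
       / (h1*(q^2*(t^2-h1)))"
  using assms by (simp add: field_simps; algebra)

lemma residue_balance_be:
  fixes t h1 h2 q :: complex
  assumes "t \<noteq> 0" "h1 \<noteq> 0" "h2 \<noteq> 0" "q \<noteq> 0" "h1 - t^2 \<noteq> 0"
  shows "(h1-h2)*(h1/t)^2*((h1/t)^2-h1*q)/(h1^3*h2^3*q) * (h1 - q*h2)*h2^3*(t^4-h2^2)/t^6
    = (t - h2/t) * ((h1/t)^8/((h1*(h1 - t^2)/t^2)*h1^4)) * (t + h2/t) * ((t + h2/t) - (h1/(t*q) + h2*t*q/h1)) * ((t + h2/t) - (h1/t + h2*t/h1))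
       / h1"
  using assms by (simp add: field_simps; algebra)

text \<open>Clearing the denominators of the three terms of L1 (a purely rational identity).\<close>
lemma clear_denominators:
  fixes p g d1 d2 e1 e2 n1 n2 A B K V y0 y1 y2 :: complex
  assumes "d1 \<noteq> 0" "d2 \<noteq> 0" "g \<noteq> 0" "p \<noteq> 0" "e1 \<noteq> 0" "e2 \<noteq> 0"
  shows "p*d1*d2*(A/d1*(y0 - n1/e1*y1) + B/d2*(y2 - n2/e2*y1) + K*V/(g*p*e2*e1)*y1)
    = y0*A*p*d2 + y2*B*p*d1 + y1*((- p*d2*A*g*e2*n1 - p*d1*B*g*e1*n2 + K*d1*d2*V)/(g*e1*e2))"
  using assms by (simp add: field_simps; algebra)

lemma Q_point_factor:
  fixes P g e1 e2 n2 y1 y2 :: complex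
  assumes "g \<noteq> 0" "e1 \<noteq> 0" "e2 \<noteq> 0"
  shows "y2*P + y1*(-(P*g*e1*n2)/(g*e1*e2)) = P*(y2 - y1*n2/e2)"
  using assms by (simp add: field_simps; algebra)

section \<open>Bidegree (3,2) polynomials vanishing on the conic\<close>

lemma affine_two_zeros:
  fixes al be g1 g2 :: complex
  assumes "al*g1 + be = 0" "al*g2 + be = 0" "g1 \<noteq> g2"
  shows "al = 0 \<and> be = 0"
proof -
  have "al*(g1 - g2) = (al*g1 + be) - (al*g2 + be)" by algebra
  then have "al = 0" using assms by simp
  then show ?thesis using assms by simp
qed

lemma poly_zero_cofinite:
  fixes p :: "complex poly"
  assumes "finite S" "\<forall>x. x \<notin> S \<longrightarrow> poly p x = 0"
  shows "p = 0"
proof (rule ccontr)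
  assume "p \<noteq> 0"
  then have "finite {x. poly p x = 0}" by (rule poly_roots_finite)
  then have "finite (S \<union> {x. poly p x = 0})" using assms(1) by simp
  moreover have "S \<union> {x. poly p x = 0} = UNIV" using assms(2) by auto
  ultimately show False using infinite_UNIV_char_0[where 'a=complex] by simp
qed

lemma finite_square_roots: "finite {f::complex. f^2 = c}"
proof -
  have "{f::complex. f^2 = c} = {x. poly [:-c,0,1:] x = 0}" by (auto simp: power2_eq_square)
  moreover have "[:-c,0,1:] \<noteq> (0::complex poly)" by simp
  ultimately show ?thesis using poly_roots_finite by metis
qed

definition Ek :: "(nat \<Rightarrow> nat \<Rightarrow> complex) \<Rightarrow> nat \<Rightarrow> complex \<Rightarrow> complex" where
  "Ek e k f = (\<Sum>i\<le>3. e i k * f^i)"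

lemma sum3: "(\<Sum>i\<le>3::nat. X i) = X 0 + X 1 + X 2 + (X 3 :: complex)"
  by (simp add: eval_nat_numeral atMost_Suc add_ac)
lemma sum2: "(\<Sum>i\<le>2::nat. X i) = X 0 + X 1 + (X 2 :: complex)"
  by (simp add: eval_nat_numeral atMost_Suc add_ac)

lemma bipoly_expand: "bipoly e f g = Ek e 0 f + Ek e 1 f * g + Ek e 2 f * g^2"
  unfolding bipoly_def Ek_def
  by (simp add: sum2 sum3 algebra_simps)

lemma Ek_poly: "Ek e k f = poly [:e 0 k, e 1 k, e 2 k, e 3 k:] f"
  unfolding Ek_def sum3 by (simp add: algebra_simps power2_eq_square power3_eq_cube)

lemma power_split5:
  fixes t X Y :: complex
  assumes "t \<noteq> 0" "i + j \<le> 5"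
  shows "t^5 * ((X/t)^i * (Y/t)^j) = X^i * Y^j * t^(5-i-j)"
proof -
  have "t^5 = t^i * t^j * t^(5-i-j)" using assms(2) by (simp flip: power_add)
  then show ?thesis using assms(1) by (simp add: power_divide field_simps)
qed

text \<open>The pull-back t^5 bipoly e (f(t), g(t)) of a (3,2)-polynomial to the parameter line.\<close>
definition upol :: "complex \<Rightarrow> complex \<Rightarrow> (nat \<Rightarrow> nat \<Rightarrow> complex) \<Rightarrow> complex poly" where
  "upol h1 h2 e = (\<Sum>i\<le>3. \<Sum>j\<le>2. smult (e i j) ([:h1,0,1:]^i * [:h2,0,1:]^j * monom 1 (5-i-j)))"

lemma poly_upol:
  assumes t: "t \<noteq> 0"
  shows "poly (upol h1 h2 e) t = t^5 * bipoly e (fP h1 t) (gP h2 t)"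
proof -
  have f: "fP h1 t = (t^2 + h1)/t" "gP h2 t = (t^2+h2)/t" using t
    by (simp_all add: fP_def gP_def field_simps power2_eq_square)
  have "poly (upol h1 h2 e) t = (\<Sum>i\<le>3. \<Sum>j\<le>2. e i j * ((t^2+h1)^i * (t^2+h2)^j * t^(5-i-j)))"
    unfolding upol_def by (simp add: poly_sum poly_monom power2_eq_square algebra_simps)
  also have "\<dots> = (\<Sum>i\<le>3. \<Sum>j\<le>2. t^5 * (e i j * (fP h1 t)^i * (gP h2 t)^j))"
  proof (intro sum.cong refl)
    fix i j assume "i \<in> {..3::nat}" "j \<in> {..2::nat}"
    then have "i + j \<le> 5" by simp
    from power_split5[OF t this, of "t^2+h1" "t^2+h2"] show
      "e i j * ((t^2+h1)^i * (t^2+h2)^j * t^(5-i-j)) = t^5 * (e i j * (fP h1 t)^i * (gP h2 t)^j)"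
      unfolding f by (simp add: algebra_simps)
  qed
  also have "\<dots> = t^5 * bipoly e (fP h1 t) (gP h2 t)"
    unfolding bipoly_def by (simp add: sum_distrib_left)
  finally show ?thesis .
qed

lemma degree_upol:
  assumes "e 3 2 = 0"
  shows "degree (upol h1 h2 e) \<le> 9"
  unfolding upol_def
proof (intro degree_sum_le finite_atMost)
  fix i j assume i: "i \<in> {..3::nat}" and j: "j \<in> {..2::nat}"
  show "degree (smult (e i j) ([:h1,0,1:]^i * [:h2,0,1:]^j * monom 1 (5-i-j))) \<le> 9"
  proof (cases "i = 3 \<and> j = 2")
    case True then show ?thesis using assms by simp
  next
    case False
    then have ij: "i + j \<le> 4" using i j by auto
    have "degree ([:h1,0,1:]^i * [:h2,0,1:]^j * monom (1::complex) (5-i-j))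
        \<le> degree ([:h1,0,1:]^i) + degree ([:h2,0,1:]^j) + degree (monom (1::complex) (5-i-j))"
      by (meson add_mono degree_mult_le order.trans order_refl)
    also have "\<dots> \<le> 2*i + 2*j + (5-i-j)"
    proof -
      have "degree ([:h1,0,1:]^i) \<le> 2*i"
        using degree_power_le[of "[:h1,0,1:]" i] by (simp add: mult.commute)
      moreover have "degree ([:h2,0,1:]^j) \<le> 2*j"
        using degree_power_le[of "[:h2,0,1:]" j] by (simp add: mult.commute)
      moreover have "degree (monom (1::complex) (5-i-j)) = 5-i-j" by (simp add: degree_monom_eq)
      ultimately show ?thesis by linarith
    qed
    also have "\<dots> \<le> 9" using ij by linarith
    finally show ?thesis using degree_smult_le order.trans by blast
  qed
qed

lemma vanish_on_conic:
  assumes e32: "e 3 2 = 0" and R: "card R \<ge> 10" "0 \<notin> R"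
    and van: "\<forall>r\<in>R. bipoly e (fP h1 r) (gP h2 r) = 0" and t: "t \<noteq> 0"
  shows "bipoly e (fP h1 t) (gP h2 t) = 0"
proof -
  have "upol h1 h2 e = 0"
  proof (rule ccontr)
    assume ne: "upol h1 h2 e \<noteq> 0"
    have "R \<subseteq> {x. poly (upol h1 h2 e) x = 0}"
    proof
      fix x assume x: "x \<in> R"
      then have "x \<noteq> 0" using R(2) by auto
      then show "x \<in> {x. poly (upol h1 h2 e) x = 0}" using van x by (simp add: poly_upol)
    qed
    then have "card R \<le> card {x. poly (upol h1 h2 e) x = 0}"
      by (intro card_mono poly_roots_finite ne)
    also have "\<dots> \<le> degree (upol h1 h2 e)" by (rule card_poly_roots_bound[OF ne])
    also have "\<dots> \<le> 9" using degree_upol[of e h1 h2] e32 by simp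
    finally show False using R(1) by simp
  qed
  then show ?thesis using poly_upol[OF t, of h1 h2 e] t by simp
qed

text \<open>A (3,2)-polynomial vanishing on the conic is divisible by phi, away from the two
  branch lines f^2 = 4 h1: each vertical line meets the conic in two distinct points.\<close>
lemma conic_factor:
  assumes h1: "h1 \<noteq> 0" and h2: "h2 \<noteq> 0" and h12: "h1 \<noteq> h2"
    and curve0: "\<And>t. t \<noteq> 0 \<Longrightarrow> bipoly e (fP h1 t) (gP h2 t) = 0"
    and f: "f^2 \<noteq> 4*h1"
  shows "bipoly e f g = h2 * Ek e 2 f * phi h1 h2 f g"
proof -
  define t where "t = (f + csqrt (f^2 - 4*h1))/2"
  have tq: "t^2 - f*t + h1 = 0"
  proof -
    have "t^2 - f*t + h1 = ((csqrt (f^2 - 4*h1))^2 - (f^2 - 4*h1))/4"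
      unfolding t_def by (simp add: field_simps; algebra)
    then show ?thesis by simp
  qed
  have t0: "t \<noteq> 0" using tq h1 by auto
  have ft: "fP h1 t = f"
  proof -
    have "t*t + h1 = f*t" using tq by (simp add: algebra_simps power2_eq_square)
    then show ?thesis using t0 by (simp add: fP_def field_simps)
  qed
  have th: "t^2 \<noteq> h1"
  proof
    assume a: "t^2 = h1"
    then have "f*t = 2*t^2" using tq by (simp add: algebra_simps)
    then have "f = 2*t" using t0 by (simp add: power2_eq_square)
    then have "f^2 = 4*h1" using a by (simp add: power2_eq_square)
    then show False using f by simp
  qed
  have t'0: "h1/t \<noteq> 0" using h1 t0 by simp
  have ft': "fP h1 (h1/t) = f" using ft h1 t0 by (simp add: fP_def add.commute)
  have gd: "gP h2 t \<noteq> gP h2 (h1/t)"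
  proof
    assume "gP h2 t = gP h2 (h1/t)"
    then have "(t^2 - h1)*(h1 - h2) = 0" using t0 h1
      by (simp add: gP_def field_simps power2_eq_square; algebra)
    then show False using th h12 by simp
  qed
  define al where "al = Ek e 1 f + h2 * Ek e 2 f * (f/h1 + f/h2)"
  define be where "be = Ek e 0 f - h2 * Ek e 2 f * (f^2/h1 - (h1-h2)*(1/h1-1/h2))"
  have linear: "bipoly e f g' - h2 * Ek e 2 f * phi h1 h2 f g' = al*g' + be" for g'
    unfolding bipoly_expand phi_expand al_def be_def using h2
    by (simp add: field_simps; algebra)
  have "al*gP h2 t + be = 0" "al*gP h2 (h1/t) + be = 0"
    using linear[of "gP h2 t"] linear[of "gP h2 (h1/t)"] curve0[OF t0] curve0[OF t'0] ft ft'
      phi_curve[OF t0 h1 h2] phi_curve[OF t'0 h1 h2] by auto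
  then have "al = 0 \<and> be = 0" using affine_two_zeros gd by blast
  then show ?thesis using linear[of g] by simp
qed

text \<open>If a (3,2)-polynomial without f^3 g^2 term equals h2 E2(f) phi off finitely many
  vertical lines, then E2 is linear: the constant term in g forces e 2 2 = 0.\<close>
lemma conic_factor_E2_linear:
  assumes h1: "h1 \<noteq> 0" and h2: "h2 \<noteq> 0" and e32: "e 3 2 = 0"
    and fac: "\<And>f g. f^2 \<noteq> 4*h1 \<Longrightarrow> bipoly e f g = h2 * Ek e 2 f * phi h1 h2 f g"
  shows "e 2 2 = 0"
proof -
  define K0 where "K0 = (h1-h2)*(1/h1-1/h2)"
  define P4 where "P4 = [:e 0 0, e 1 0, e 2 0, e 3 0:] - smult h2 ([:e 0 2, e 1 2, e 2 2:] * [:-K0, 0, 1/h1:])"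
  have "P4 = 0"
  proof (rule poly_zero_cofinite[OF finite_square_roots[of "4*h1"]], intro allI impI)
    fix f assume "f \<notin> {f. f^2 = 4*h1}"
    then have "bipoly e f 0 = h2 * Ek e 2 f * phi h1 h2 f 0" using fac by simp
    then have "Ek e 0 f = h2 * Ek e 2 f * (f^2/h1 - K0)"
      by (simp add: bipoly_expand phi_expand K0_def)
    moreover have "Ek e 2 f = poly [:e 0 2, e 1 2, e 2 2:] f"
      using e32 by (simp add: Ek_poly)
    ultimately show "poly P4 f = 0"
      unfolding P4_def using e32 by (simp add: Ek_poly algebra_simps power2_eq_square)
  qed
  then have "coeff P4 4 = 0" by simp
  moreover have "coeff ([:e 0 2, e 1 2, e 2 2:] * [:-K0, 0, 1/h1:]) (2+2) = e 2 2 * (1/h1)"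
    by (subst coeff_mult_top) (simp_all add: degree_pCons_le numeral_2_eq_2)
  ultimately have "h2 * (e 2 2 * (1/h1)) = 0"
    unfolding P4_def by (simp add: numeral_eq_Suc)
  then show ?thesis using h1 h2 by simp
qed

lemma conic_factor_zero:
  assumes h1: "h1 \<noteq> 0" and h2: "h2 \<noteq> 0" and e32: "e 3 2 = 0"
    and fac: "\<And>f g. f^2 \<noteq> 4*h1 \<Longrightarrow> bipoly e f g = h2 * Ek e 2 f * phi h1 h2 f g"
    and E2a: "Ek e 2 a = 0" and E2b: "Ek e 2 b = 0" and ab: "a \<noteq> b"
    and ij: "i \<le> 3" "j \<le> 2"
  shows "e i j = 0"
proof -
  have e22: "e 2 2 = 0" by (rule conic_factor_E2_linear[OF h1 h2 e32 fac])
  have "Ek e 2 f = e 1 2 * f + e 0 2" for f using e22 e32 by (simp add: Ek_def sum3 algebra_simps)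
  then have E2zero: "e 0 2 = 0 \<and> e 1 2 = 0" using affine_two_zeros E2a E2b ab by metis
  have E2f: "Ek e 2 f = 0" for f using E2zero e22 e32 by (simp add: Ek_def sum3)
  have off: "Ek e k f = 0" if "f^2 \<noteq> 4*h1" "k \<le> 1" for f k
  proof -
    have "bipoly e f 0 = 0" "bipoly e f 1 = 0" using fac[OF that(1)] E2f by auto
    then show ?thesis using E2f that(2) by (auto simp: bipoly_expand le_Suc_eq)
  qed
  show ?thesis
  proof (cases "j \<le> 1")
    case True
    have "[:e 0 j, e 1 j, e 2 j, e 3 j:] = 0"
    proof (rule poly_zero_cofinite[OF finite_square_roots[of "4*h1"]], intro allI impI)
      fix f assume "f \<notin> {f. f^2 = 4*h1}"
      then have "Ek e j f = 0" using off True by simp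
      then show "poly [:e 0 j, e 1 j, e 2 j, e 3 j:] f = 0" by (simp add: Ek_poly)
    qed
    then have "coeff [:e 0 j, e 1 j, e 2 j, e 3 j:] i = 0" by simp
    then show ?thesis using ij by (auto simp: le_Suc_eq numeral_eq_Suc)
  next
    case False
    then have "j = 2" using ij by simp
    then show ?thesis using E2zero e22 e32 ij by (auto simp: le_Suc_eq numeral_eq_Suc)
  qed
qed

section \<open>The curve for generic parameters\<close>

locale generic =
  fixes h1 h2 :: complex and u :: "nat \<Rightarrow> complex" and z y0 y1 y2 :: complex
  assumes h1: "h1 \<noteq> 0" and h2: "h2 \<noteq> 0" and h12: "h1 \<noteq> h2" and z0: "z \<noteq> 0"
    and y0n: "y0 \<noteq> 0" and y1n: "y1 \<noteq> 0" and y2n: "y2 \<noteq> 0" and y01: "y0 \<noteq> y1" and y12: "y1 \<noteq> y2"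
    and un: "\<forall>i\<in>{1..8}. u i \<noteq> 0"
    and czq2: "z^2 - h1*(qpar h1 h2 u)^2 \<noteq> 0"
    and cz1: "z^2 - h1 \<noteq> 0"
    and czq: "z^2 - h1*qpar h1 h2 u \<noteq> 0"
    and cta: "(z/qpar h1 h2 u)^2 - h2 \<noteq> 0"
    and ctb: "(h1/z)^2 - h2 \<noteq> 0"
    and cal: "gP h2 (z/qpar h1 h2 u) \<noteq> 0"
    and cbe: "gP h2 (h1/z) \<noteq> 0"
    and calbe: "gP h2 (z/qpar h1 h2 u) \<noteq> gP h2 (h1/z)"
    and cde: "gP h2 z \<noteq> 0"
    and cdeal: "gP h2 z \<noteq> gP h2 (z/qpar h1 h2 u)"
    and cdebe: "gP h2 z \<noteq> gP h2 (h1/z)"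
    and cga: "gP h2 (h1*qpar h1 h2 u/z) \<noteq> 0"
    and cgaal: "gP h2 (h1*qpar h1 h2 u/z) \<noteq> gP h2 (z/qpar h1 h2 u)"
    and cgabe: "gP h2 (h1*qpar h1 h2 u/z) \<noteq> gP h2 (h1/z)"
    and cab: "fP h1 (z/qpar h1 h2 u) \<noteq> fP h1 z"
    and ca4: "(fP h1 (z/qpar h1 h2 u))^2 - 4*h1 \<noteq> 0"
    and cb4: "(fP h1 z)^2 - 4*h1 \<noteq> 0"
    and cui: "\<forall>i\<in>{1..8}. (u i)^2 - h2 \<noteq> 0 \<and> gP h2 (u i) \<noteq> 0
       \<and> gP h2 (u i) \<noteq> gP h2 (z/qpar h1 h2 u) \<and> gP h2 (u i) \<noteq> gP h2 (h1/z)
       \<and> u i \<noteq> z \<and> u i \<noteq> h1*qpar h1 h2 u/z"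
    and cinj: "\<forall>i\<in>{1..8}. \<forall>j\<in>{1..8}. i \<noteq> j \<longrightarrow> u i \<noteq> u j"
    and cQ1: "(gP h2 z*y1 - gP h2 (h1/z)*y2)/(y1-y2) \<noteq> 0"
    and cQ1a: "(gP h2 z*y1 - gP h2 (h1/z)*y2)/(y1-y2) \<noteq> gP h2 (z/qpar h1 h2 u)"
    and cQ2: "(gP h2 (z/qpar h1 h2 u)*y0 - gP h2 (h1*qpar h1 h2 u/z)*y1)/(y0-y1) \<noteq> 0"
    and cQ2b: "(gP h2 (z/qpar h1 h2 u)*y0 - gP h2 (h1*qpar h1 h2 u/z)*y1)/(y0-y1) \<noteq> gP h2 (h1/z)"
begin

text \<open>Notation: a = f(z/q), b = f(z); al, be, ga, de are the values of g at z/q, h1/z,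
  h1 q/z, z; A, B, K are the coefficients of the three terms of L1; and
  the numerator NN, so that phi (f-a)(f-b) L1 = y0 A phi (f-b) + y2 B phi (f-a)
  + y1 NN/(g (g-al)(g-be)).\<close>
definition "q = qpar h1 h2 u"
definition "m = msym u"
definition "a = fP h1 (z/q)"
definition "b = fP h1 z"
definition "f0 = fbar h1 q (z/q)"
definition "al = gP h2 (z/q)"
definition "be = gP h2 (h1/z)"
definition "ga = gP h2 (h1*q/z)"
definition "de = gP h2 z"
definition "A = q^5*Uf u (z/q)/(z^2-h1*q^2)"
definition "B = z^8*Uf u (h1/z)/((z^2-h1)*h1^4)"
definition "K = (h1-h2)*z^2*(z^2-h1*q)/(h1^3*h2^3*q)"
definition "VV f g = Vfun h1 h2 u f0 f g"
definition "NN f g = - phi h1 h2 f g*(f-b)*A*g*(g-be)*(g-ga) - phi h1 h2 f g*(f-a)*B*g*(g-al)*(g-de)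
   + K*(f-a)*(f-b)*VV f g"

lemma prod_u_nonzero: "(\<Prod>i\<in>{1..8::nat}. u i) \<noteq> 0" using un by simp
lemma q0: "q \<noteq> 0" using prod_u_nonzero h1 h2 by (simp add: q_def qpar_def)
lemma qm8: "q * m 8 = h1^2*h2^2" using prod_u_nonzero by (simp add: q_def qpar_def m_def msym8)
lemma m0: "m 0 = 1" by (simp add: m_def msym0)

lemma V_eq: "VV f g = Xf h1 h2 q f0 f g * Pd m h2 g - Yf h1 h2 q f0 f g * Pn m h2 g"
  unfolding VV_def Vfun_def Let_def Xf_def Yf_def q_def m_def ..

lemma V_on_param:
  assumes t: "t \<noteq> 0"
  shows "(t - h2/t) * VV f (t + h2/t) =
     Ue m (h2/t) * (t^3/h2^3) * (Xf h1 h2 q f0 f (t + h2/t) * t^2 * h2^3 + Yf h1 h2 q f0 f (t + h2/t))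
     + Ue m t * (- Xf h1 h2 q f0 f (t + h2/t) * (h2/t)^5 - Yf h1 h2 q f0 f (t + h2/t) / t^3)"
proof -
  have tv: "t * (h2/t) = h2" using t by simp
  have v0: "h2/t \<noteq> 0" using t h2 by simp
  have e1: "(t - h2/t) * Pd m h2 (t + h2/t) = t^5 * Ue m (h2/t) - (h2/t)^5 * Ue m t"
    using Pd_identity[of t "h2/t" m] tv by simp
  have e2: "(t - h2/t) * Pn m h2 (t + h2/t) * (t^3*(h2/t)^3) = Ue m t * (h2/t)^3 - t^3 * Ue m (h2/t)"
    using Pn_identity[OF t v0, of m] tv by simp
  have e2': "(t - h2/t) * Pn m h2 (t + h2/t) = Ue m t / t^3 - Ue m (h2/t) * (t^3/h2^3)"
  proof -
    have "t^3*(h2/t)^3 \<noteq> 0" using t h2 by simp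
    then show ?thesis using e2 t h2 by (simp add: field_simps) (simp add: algebra_simps)?
  qed
  show ?thesis
    unfolding V_eq right_diff_distrib mult.assoc[symmetric]
    apply (subst mult.commute[of "t - h2/t" "Xf _ _ _ _ _ _"])
    apply (subst mult.commute[of "t - h2/t" "Yf _ _ _ _ _ _"])
    unfolding mult.assoc e1 e2' using t h2 by (simp add: field_simps; algebra)
qed

text \<open>NN vanishes identically on the line g = al = g(z/q): the pole of the first term
  of L1 there is cancelled by that of the third.\<close>
lemma N_vanishes_al: "NN f al = 0"
proof -
  define t where "t = z/q"
  have t0: "t \<noteq> 0" using z0 q0 by (simp add: t_def)
  have zt: "z = q*t" using q0 by (simp add: t_def)
  have al_t: "al = t + h2/t" by (simp add: al_def gP_def t_def)
  have f0_t: "f0 = t + h1/(q*t)" by (simp add: f0_def fbar_def t_def)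
  have a_t: "a = t + h1/t" by (simp add: a_def fP_def t_def)
  have be_z: "be = h1/z + h2*z/h1" by (simp add: be_def gP_def)
  have be_t: "be = h1/(t*q) + h2*t*q/h1" by (simp only: be_z) (simp add: zt mult_ac)
  have ga_z: "ga = h1*q/z + h2*z/(h1*q)" by (simp add: ga_def gP_def)
  have ga_t: "ga = h1/t + h2*t/h1" using q0 t0 h1 by (simp only: ga_z) (simp add: zt field_simps)
  have th: "t^2 - h1 \<noteq> 0"
  proof
    assume "t^2 - h1 = 0"
    then have "z^2 - h1*q^2 = 0" using zt by (simp add: power_mult_distrib algebra_simps)
    then show False using czq2 by (simp add: q_def)
  qed
  have tv: "t - h2/t \<noteq> 0"
  proof
    assume "t - h2/t = 0"
    then have "t^2 - h2 = 0" using t0 by (simp add: field_simps power2_eq_square)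
    then show False using cta by (simp add: t_def q_def)
  qed
  have Vt: "(t - h2/t) * VV f al = Ue m t * ((h1 - q*h2)*h2^3*(t^4 - h2^2)*(f - (h2/t + h1*t/h2))/t^6)"
    unfolding al_t V_on_param[OF t0] f0_t XY_shifted[OF t0 h1 h2 q0] XY_shifted_residue[OF t0 h1 h2 q0] by simp
  have ph: "phi h1 h2 f al = (f - a) * (f - (h2/t + h1*t/h2)) / h1"
    unfolding al_t a_t by (rule phi_factor_f[OF t0 h1 h2])
  have Aeq: "A = q^5 * Ue m t/(z^2-h1*q^2)"
    by (simp add: A_def Uf_Ue m_def t_def)
  have den: "z^2 - h1*q^2 = q^2*(t^2-h1)" using zt by (simp add: power_mult_distrib algebra_simps)
  have scal: "K*(h1-q*h2)*h2^3*(t^4-h2^2)/t^6 = (t-h2/t)*q^5*al*(al-be)*(al-ga)/(h1*(z^2-h1*q^2))"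
    using residue_balance_al[OF t0 h1 h2 q0 th] unfolding K_def al_t be_t ga_t den
    by (simp only: zt)
  have "(t - h2/t) * NN f al = 0"
  proof -
    have "(t - h2/t) * NN f al = - (t - h2/t) * phi h1 h2 f al*(f-b)*A*al*(al-be)*(al-ga)
        + K*(f-a)*(f-b)*((t - h2/t) * VV f al)"
      unfolding NN_def by algebra
    also have "\<dots> = (f-a)*(f-b)*(f - (h2/t + h1*t/h2))*Ue m t *
        (K*(h1-q*h2)*h2^3*(t^4-h2^2)/t^6 - (t-h2/t)*q^5*al*(al-be)*(al-ga)/(h1*(z^2-h1*q^2)))"
      unfolding Vt ph Aeq by (simp only: divide_inverse inverse_mult_distrib) algebra
    also have "\<dots> = 0" unfolding scal by simp
    finally show ?thesis .
  qed
  then show ?thesis using tv by simp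
qed

text \<open>Likewise on the line g = be = g(h1/z), for the second and third terms.\<close>
lemma N_vanishes_be: "NN f be = 0"
proof -
  define t where "t = h1/z"
  have t0: "t \<noteq> 0" using z0 h1 by (simp add: t_def)
  have zt: "z = h1/t" using h1 z0 by (simp add: t_def)
  have be_t: "be = t + h2/t" by (simp add: be_def gP_def t_def)
  have f0_t: "f0 = t + h1/(q*t)" using h1 z0 q0 by (simp add: f0_def fbar_def t_def field_simps)
  have b_t: "b = t + h1/t" using h1 z0 by (simp add: b_def fP_def t_def)
  have al_z: "al = z/q + h2*q/z" by (simp add: al_def gP_def)
  have al_t: "al = h1/(t*q) + h2*t*q/h1" using h1 t0 by (simp only: al_z) (simp add: zt field_simps)
  have de_z: "de = z + h2/z" by (simp add: de_def gP_def)
  have de_t: "de = h1/t + h2*t/h1" using h1 t0 by (simp only: de_z) (simp add: zt field_simps)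
  have den: "(h1/t)^2 - h1 = h1*(h1 - t^2)/t^2" using t0 by (simp add: field_simps power2_eq_square)
  have th: "h1 - t^2 \<noteq> 0"
  proof
    assume "h1 - t^2 = 0"
    then have "z^2 - h1 = 0" using zt den by simp
    then show False using cz1 by simp
  qed
  have tv: "t - h2/t \<noteq> 0"
  proof
    assume "t - h2/t = 0"
    then have "t^2 - h2 = 0" using t0 by (simp add: field_simps power2_eq_square)
    then show False using ctb by (simp add: t_def)
  qed
  have Vt: "(t - h2/t) * VV f be = Ue m t * ((h1 - q*h2)*h2^3*(t^4 - h2^2)*(f - (h2/t + h1*t/h2))/t^6)"
    unfolding be_t V_on_param[OF t0] f0_t XY_shifted[OF t0 h1 h2 q0] XY_shifted_residue[OF t0 h1 h2 q0] by simp
  have ph: "phi h1 h2 f be = (f - b) * (f - (h2/t + h1*t/h2)) / h1"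
    unfolding be_t b_t by (rule phi_factor_f[OF t0 h1 h2])
  have Beq: "B = z^8 * Ue m t/((z^2-h1)*h1^4)"
    by (simp add: B_def Uf_Ue m_def t_def)
  have scal: "K*(h1-q*h2)*h2^3*(t^4-h2^2)/t^6 = (t-h2/t)*(z^8/((z^2-h1)*h1^4))*be*(be-al)*(be-de)/h1"
    using residue_balance_be[OF t0 h1 h2 q0 th] unfolding K_def be_t al_t de_t
    by (simp only: zt den)
  have "(t - h2/t) * NN f be = 0"
  proof -
    have "(t - h2/t) * NN f be = - (t - h2/t) * phi h1 h2 f be*(f-a)*B*be*(be-al)*(be-de)
        + K*(f-a)*(f-b)*((t - h2/t) * VV f be)"
      unfolding NN_def by algebra
    also have "\<dots> = (f-a)*(f-b)*(f - (h2/t + h1*t/h2))*Ue m t *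
        (K*(h1-q*h2)*h2^3*(t^4-h2^2)/t^6 - (t-h2/t)*(z^8/((z^2-h1)*h1^4))*be*(be-al)*(be-de)/h1)"
      unfolding Vt ph Beq by (simp only: divide_inverse inverse_mult_distrib) algebra
    also have "\<dots> = 0" unfolding scal by simp
    finally show ?thesis .
  qed
  then show ?thesis using tv by simp
qed

lemma V_at_0: "VV f 0 = 0"
proof -
  have pd: "Pd m h2 0 = h2^4 * Pn m h2 0" using h2 by (simp add: Pd_def Pn_def field_simps; algebra)
  have xy: "h2^4 * Xf h1 h2 q f0 f 0 - Yf h1 h2 q f0 f 0 = 0"
    using h1 h2 q0 unfolding Xf_def Yf_def by (simp add: field_simps; algebra)
  have "VV f 0 = Pn m h2 0 * (h2^4 * Xf h1 h2 q f0 f 0 - Yf h1 h2 q f0 f 0)"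
    unfolding V_eq pd by algebra
  then show ?thesis using xy by simp
qed

lemma N_vanishes_0: "NN f 0 = 0"
  unfolding NN_def V_at_0 by simp

text \<open>NN as an explicit bivariate polynomial Nbi of bidegree (3,5).  In V the two g^6
  terms cancel because q m8 = h1^2 h2^2 and m0 = 1, which is why Vp separates them.\<close>
definition "C1 = (h1/q - h2)*(h1-h2)*(1/h2)"
definition "C2 = (q/h1 - 1/h2)*(1/h1 - 1/h2)*h2"
definition "PhiP = (FV - GV)*(CC (1/h1)*FV - CC (1/h2)*GV) - CC ((h1-h2)*(1/h1-1/h2))"
definition "X1p = CC q * (CC f0 * FV - CC f0 * GV - FV*GV - CC C1)"
definition "Y1p = CC (h1^2*h2^4) * (CC (f0*q/h1/h1)*FV - CC (f0*q/h1/h2)*GV - CC (1/h1/h2)*FV*GV - CC C2)"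
definition "Pdp = CC (-h2*m 7)*GV^3 + CC (h2^2*m 6 - 3*h2*m 8 - h2^5*m 0)*GV^2
   + CC (2*h2^2*m 7 - h2^3*m 5 + h2^5*m 1)*GV + CC (h2^6*m 0 - h2^5*m 2 + h2^4*m 4 - h2^3*m 6 + h2^2*m 8)"
definition "Pnp = CC (- m 1)*GV^3 + CC (m 2 - 3*h2*m 0 - m 8/h2^3)*GV^2
   + CC (2*h2*m 1 - m 3 + m 7/h2^2)*GV + CC (h2^2*m 0 - h2*m 2 + m 4 - m 6/h2 + m 8/h2^2)"
definition "Vp = (X1p + CC q*GV^2)*Pdp - (Y1p + CC (h1^2*h2^2)*GV^2)*Pnp + GV^4*(CC (m 8)*X1p - CC (m 0)*Y1p)"
definition "M1 = CC (-A)*(FV - CC b)*GV*(GV - CC be)*(GV - CC ga) + CC (-B)*(FV - CC a)*GV*(GV - CC al)*(GV - CC de)"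
definition "Nbi = PhiP * M1 + CC K * (FV - CC a) * (FV - CC b) * Vp"

lemma beval_PhiP: "beval PhiP f g = phi h1 h2 f g"
  by (simp add: PhiP_def phi_def)

lemma Xf_split: "Xf h1 h2 q f0 f g = beval X1p f g + q*g^2"
  unfolding Xf_def X1p_def C1_def by simp algebra
lemma Yf_split: "Yf h1 h2 q f0 f g = beval Y1p f g + h1^2*h2^2*g^2"
  unfolding Yf_def Y1p_def C2_def using h1 h2 by (simp add: field_simps; algebra)
lemma Pd_split: "Pd m h2 g = beval Pdp f g + m 8 * g^4"
  unfolding Pd_def Pdp_def by simp
lemma Pn_split: "Pn m h2 g = beval Pnp f g + m 0 * g^4"
  unfolding Pn_def Pnp_def by simp

lemma beval_Vp: "beval Vp f g = VV f g"
proof -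
  have "VV f g = (beval X1p f g + q*g^2) * (beval Pdp f g + m 8 * g^4)
      - (beval Y1p f g + h1^2*h2^2*g^2) * (beval Pnp f g + m 0 * g^4)"
    unfolding V_eq Xf_split Yf_split Pd_split[of g f] Pn_split[of g f] ..
  then show ?thesis unfolding Vp_def using qm8 m0 by simp algebra
qed

lemma beval_Nbi: "beval Nbi f g = NN f g"
  unfolding Nbi_def NN_def M1_def by (simp add: beval_PhiP beval_Vp) algebra

lemma bideg_le_PhiP: "bideg_le PhiP 2 2"
proof -
  have "bideg_le PhiP (1+1) (1+1)" unfolding PhiP_def by (intro bideg_leI) simp_all
  then show ?thesis by (simp add: eval_nat_numeral)
qed
lemma bideg_le_X1p: "bideg_le X1p 1 1"
proof -
  have "bideg_le X1p (1+0) (0+1)" unfolding X1p_def by (intro bideg_leI) simp_all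
  then show ?thesis by simp
qed
lemma bideg_le_Y1p: "bideg_le Y1p 1 1"
proof -
  have "bideg_le Y1p (1+0) (0+1)" unfolding Y1p_def by (intro bideg_leI) simp_all
  then show ?thesis by simp
qed
lemma bideg_le_Pdp: "bideg_le Pdp 0 3" unfolding Pdp_def by (intro bideg_leI) simp_all
lemma bideg_le_Pnp: "bideg_le Pnp 0 3" unfolding Pnp_def by (intro bideg_leI) simp_all
lemma bideg_le_P1: "bideg_le (X1p + CC q*GV^2) 1 2"
  by (intro bideg_leI bideg_le_mono[OF bideg_le_X1p]) simp_all
lemma bideg_le_P2: "bideg_le (Y1p + CC (h1^2*h2^2)*GV^2) 1 2"
  by (intro bideg_leI bideg_le_mono[OF bideg_le_Y1p]) simp_all
lemma bideg_le_Vp: "bideg_le Vp 1 5"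
proof -
  have "bideg_le Vp (1+0) (2+3)" unfolding Vp_def
    by (intro bideg_le_add bideg_le_diff bideg_le_mult[OF bideg_le_P1 bideg_le_Pdp] bideg_le_mult[OF bideg_le_P2 bideg_le_Pnp]
         bideg_le_mono[OF bideg_le_mult[OF bideg_le_GVpow[of 4 4 0] bideg_le_diff[OF bideg_le_CCmult[OF bideg_le_X1p] bideg_le_CCmult[OF bideg_le_Y1p]]]])
       simp_all
  then show ?thesis by simp
qed
lemma bideg_le_M1: "bideg_le M1 1 3"
proof -
  have "bideg_le M1 (1+0+0+0) (0+1+1+1)" unfolding M1_def by (intro bideg_leI) simp_all
  then show ?thesis by (simp add: eval_nat_numeral)
qed
lemma bideg_le_Nbi: "bideg_le Nbi 3 5"
proof -
  have "bideg_le Nbi (2+1) (2+3)" unfolding Nbi_def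
    by (intro bideg_le_add bideg_le_mult[OF bideg_le_PhiP bideg_le_M1]
      bideg_le_mono[OF bideg_le_mult[OF bideg_le_mult[OF bideg_le_CCmult[OF bideg_le_FVc] bideg_le_FVc] bideg_le_Vp]]) simp_all
  then show ?thesis by simp
qed

text \<open>Dividing Nbi by g (g-al)(g-be) gives Hbi of bidegree (3,2); Tbi is then the
  polynomial F, and cc its coefficient grid.\<close>
lemma al0: "al \<noteq> 0" using cal by (simp add: al_def q_def)
lemma be0: "be \<noteq> 0" using cbe by (simp add: be_def)
lemma albe: "al \<noteq> be" using calbe by (simp add: al_def be_def q_def)

definition "Cg = [:-0,1:] * [:-al,1:] * [:-be,1:]"
definition "Hbi = map_poly (\<lambda>p. p div Cg) Nbi"
definition "Tbi = CC (y0*A)*PhiP*(FV - CC b) + CC (y2*B)*PhiP*(FV - CC a) + CC y1 * Hbi"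
definition "cc = coeff_grid Tbi"

lemma Cg_dvd: "Cg dvd coeff Nbi i"
proof -
  have r: "\<forall>f. beval Nbi f r = 0" if "r = 0 \<or> r = al \<or> r = be" for r
    using that by (auto simp: beval_Nbi N_vanishes_0 N_vanishes_al N_vanishes_be)
  show ?thesis unfolding Cg_def
    by (rule three_roots_dvd) (use beval_root_coeff[OF r] al0 be0 albe in auto)
qed

lemma Nbi_smult: "Nbi = smult Cg Hbi"
proof (rule poly_eqI)
  fix n
  show "coeff Nbi n = coeff (smult Cg Hbi) n"
    using Cg_dvd[of n] by (simp add: Hbi_def coeff_map_poly)
qed

lemma poly_Cg: "poly Cg g = g*(g-al)*(g-be)" by (simp add: Cg_def algebra_simps)
lemma Cg0: "Cg \<noteq> 0" unfolding Cg_def by simp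
lemma Cg_deg: "degree Cg = 3"
  unfolding Cg_def by (subst degree_mult_eq; simp)+
lemma Cg_lead: "coeff Cg 3 = 1"
proof -
  have "lead_coeff Cg = 1" unfolding Cg_def by (simp add: lead_coeff_mult)
  then show ?thesis using Cg_deg by simp
qed

lemma beval_Nbi_H: "beval Nbi f g = g*(g-al)*(g-be) * beval Hbi f g"
proof -
  have "beval Nbi f g = poly (Cg * poly Hbi [:f:]) g"
    by (subst Nbi_smult) (simp add: beval_def)
  then show ?thesis by (simp add: poly_Cg beval_def)
qed

lemma bideg_le_Hbi: "bideg_le Hbi 3 2"
  unfolding bideg_le_def
proof (intro conjI allI)
  show "degree Hbi \<le> 3" unfolding Hbi_def
    using bideg_le_Nbi map_poly_degree_leq[of "\<lambda>p. p div Cg" Nbi] by (simp add: bideg_le_def)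
  fix i
  have ci: "coeff Hbi i = coeff Nbi i div Cg" by (simp add: Hbi_def coeff_map_poly)
  show "degree (coeff Hbi i) \<le> 2"
  proof (cases "coeff Hbi i = 0")
    case False
    have e: "coeff Nbi i = Cg * coeff Hbi i" using Cg_dvd[of i] ci by simp
    have "degree (coeff Nbi i) = 3 + degree (coeff Hbi i)"
      unfolding e using Cg0 False by (simp add: degree_mult_eq Cg_deg)
    moreover have "degree (coeff Nbi i) \<le> 5" using bideg_le_Nbi by (simp add: bideg_le_def)
    ultimately show ?thesis by simp
  qed simp
qed

lemma bideg_le_Tbi: "bideg_le Tbi 3 2"
proof -
  have "bideg_le Tbi (2+1) (2+0)" unfolding Tbi_def
    by (intro bideg_le_add bideg_le_CCmult bideg_le_mult[OF bideg_le_CCmult[OF bideg_le_PhiP] bideg_le_FVc] bideg_le_mono[OF bideg_le_Hbi]) simp_all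
  then show ?thesis by simp
qed

lemma beval_Tbi: "beval Tbi f g = y0*A*phi h1 h2 f g*(f-b) + y2*B*phi h1 h2 f g*(f-a) + y1*beval Hbi f g"
  unfolding Tbi_def by (simp add: beval_PhiP)

text \<open>The f^3 g^2 coefficient of cc comes only from the third term of L1 and is nonzero.\<close>
lemma top_PhiP: "coeff (coeff PhiP 2) 2 = 0"
proof -
  have b1: "bideg_le (FV - GV) 1 1" by (intro bideg_leI) simp_all
  have b2: "bideg_le (CC (1/h1)*FV - CC (1/h2)*GV) 1 1" by (intro bideg_leI) simp_all
  show ?thesis unfolding PhiP_def
    by (simp add: top_mult[OF b1 b2] del: coeff_CC_mult) (simp add: FV_def GV_def CC_def coeff_pCons numeral_2_eq_2)
qed

lemma top_Vp: "coeff (coeff Vp 1) 5 = h1*h2^3 - h1^2*h2^2"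
proof -
  have t1: "coeff (coeff ((X1p + CC q*GV^2)*Pdp) 1) 5 = 0"
    apply (subst top_mult[OF bideg_le_P1 bideg_le_Pdp]) apply simp_all
    using bideg_le_coeff_in[OF bideg_le_X1p, of 2 1] by (simp add: GV_pow CC_def)
  have t2: "coeff (coeff ((Y1p + CC (h1^2*h2^2)*GV^2)*Pnp) 1) 5 = 0"
    apply (subst top_mult[OF bideg_le_P2 bideg_le_Pnp]) apply simp_all
    using bideg_le_coeff_in[OF bideg_le_Y1p, of 2 1] by (simp add: GV_pow CC_def)
  have b3: "bideg_le (CC (m 8)*X1p - CC (m 0)*Y1p) 1 1" by (intro bideg_le_diff bideg_le_CCmult bideg_le_X1p bideg_le_Y1p)
  have tx: "coeff (coeff X1p 1) 1 = - q"
    unfolding X1p_def by (simp add: FV_def GV_def CC_def)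
  have ty: "coeff (coeff Y1p 1) 1 = - h1*h2^3"
    unfolding Y1p_def using h1 h2 by (simp add: FV_def GV_def CC_def power2_eq_square power3_eq_cube power4_eq_xxxx field_simps)
  have t3: "coeff (coeff (GV^4*(CC (m 8)*X1p - CC (m 0)*Y1p)) 1) 5 = h1*h2^3 - h1^2*h2^2"
    apply (subst top_mult[OF bideg_le_GVpow[of 4 4 0] b3]) apply simp_all
    using qm8 m0 tx ty by (simp add: GV_pow algebra_simps)
  show ?thesis unfolding Vp_def using t1 t2 t3 by simp
qed

lemma top_Nbi: "coeff (coeff Nbi 3) 5 = K*(h1*h2^3 - h1^2*h2^2)"
proof -
  have t1: "coeff (coeff (PhiP * M1) 3) 5 = 0"
    by (subst top_mult[OF bideg_le_PhiP bideg_le_M1]) (simp_all add: top_PhiP)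
  have b: "bideg_le (CC K * (FV - CC a) * (FV - CC b)) 2 0"
    using bideg_le_mult[OF bideg_le_CCmult[OF bideg_le_FVc] bideg_le_FVc] by (simp add: eval_nat_numeral)
  have t2: "coeff (coeff (CC K * (FV - CC a) * (FV - CC b) * Vp) 3) 5 = K*(h1*h2^3 - h1^2*h2^2)"
    apply (subst top_mult[OF b bideg_le_Vp]) apply simp_all
    apply (subst top_mult[OF bideg_le_CCmult[OF bideg_le_FVc] bideg_le_FVc]) apply simp_all
    using top_Vp by (simp add: FV_def CC_def)
  show ?thesis unfolding Nbi_def using t1 t2 by simp
qed

lemma top_H: "coeff (coeff Hbi 3) 2 = coeff (coeff Nbi 3) 5"
proof -
  have e: "coeff Nbi 3 = Cg * coeff Hbi 3" by (subst Nbi_smult) simp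
  have "coeff (Cg * coeff Hbi 3) (3 + 2) = coeff Cg 3 * coeff (coeff Hbi 3) 2"
    by (rule coeff_mult_top) (use Cg_deg bideg_le_Hbi in \<open>auto simp: bideg_le_def\<close>)
  then show ?thesis using e Cg_lead by simp
qed

lemma cc_top: "cc 3 2 = y1*K*(h1*h2^3 - h1^2*h2^2)"
proof -
  have t1: "coeff (coeff (CC (y0*A)*PhiP*(FV - CC b)) 3) 2 = 0"
    by (subst top_mult[OF bideg_le_CCmult[OF bideg_le_PhiP] bideg_le_FVc]) (simp_all add: top_PhiP)
  have t2: "coeff (coeff (CC (y2*B)*PhiP*(FV - CC a)) 3) 2 = 0"
    by (subst top_mult[OF bideg_le_CCmult[OF bideg_le_PhiP] bideg_le_FVc]) (simp_all add: top_PhiP)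
  show ?thesis unfolding cc_def coeff_grid_def Tbi_def using t1 t2 by (simp add: top_H top_Nbi)
qed

lemma K_nonzero: "K \<noteq> 0" using h1 h2 h12 z0 q0 czq by (simp add: K_def q_def)
lemma cc_top_nonzero: "cc 3 2 \<noteq> 0"
proof -
  have "h1*h2^3 - h1^2*h2^2 = h1*h2^2*(h2-h1)" by algebra
  then show ?thesis unfolding cc_top using y1n K_nonzero h1 h2 h12 by simp
qed

lemma beval_Hbi: "g \<noteq> 0 \<Longrightarrow> g \<noteq> al \<Longrightarrow> g \<noteq> be \<Longrightarrow> beval Hbi f g = NN f g / (g*(g-al)*(g-be))"
proof -
  assume a: "g \<noteq> 0" "g \<noteq> al" "g \<noteq> be"
  have "NN f g = (g*(g-al)*(g-be)) * beval Hbi f g" using beval_Nbi_H[of f g] beval_Nbi[of f g] by simp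
  moreover have "g*(g-al)*(g-be) \<noteq> 0" using a by simp
  ultimately show ?thesis by (simp add: eq_divide_eq mult.commute)
qed

lemma bipoly_cc: "bipoly cc f g = beval Tbi f g"
  unfolding cc_def by (rule bipoly_coeff_grid[OF bideg_le_Tbi])

lemma Fcurve_eq:
  assumes "g \<noteq> 0" "phi h1 h2 f g \<noteq> 0" "f \<noteq> a" "f \<noteq> b" "g \<noteq> al" "g \<noteq> be"
  shows "Fcurve h1 h2 u z y0 y1 y2 f g = bipoly cc f g"
proof -
  have L: "L1 h1 h2 u z y0 y1 y2 f g = A/(f-a)*(y0 - (g-ga)/(g-al)*y1) + B/(f-b)*(y2 - (g-de)/(g-be)*y1)
       + K*VV f g/(g*phi h1 h2 f g*(g-be)*(g-al))*y1"
    unfolding L1_def Let_def q_def[symmetric] A_def B_def K_def VV_def f0_def a_def b_def al_def be_def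
      ga_def de_def
    by (simp add: divide_divide_eq_left mult.assoc)
  have "Fcurve h1 h2 u z y0 y1 y2 f g = phi h1 h2 f g * (f - a) * (f - b) * L1 h1 h2 u z y0 y1 y2 f g"
    unfolding Fcurve_def q_def[symmetric] a_def b_def ..
  also have "\<dots> = y0*A*phi h1 h2 f g*(f-b) + y2*B*phi h1 h2 f g*(f-a) + y1*(NN f g/(g*(g-al)*(g-be)))"
    unfolding L NN_def by (rule clear_denominators) (use assms in auto)
  also have "\<dots> = bipoly cc f g" unfolding bipoly_cc beval_Tbi using beval_Hbi assms by simp
  finally show ?thesis .
qed

text \<open>The twelve point conditions: on the conic, F reduces to y1 NN/(g (g-al)(g-be)),
  and NN vanishes at the P_i because V does (U(u_i) = 0), and at P(z), P(h1 q/z)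
  because of the factors f - b, f - a.\<close>
lemma V_vanishes_at_P:
  assumes i: "i \<in> {1..8}"
  shows "VV (fP h1 (u i)) (gP h2 (u i)) = 0"
proof -
  let ?t = "u i"
  have t0: "?t \<noteq> 0" using un i by auto
  have tv: "?t - h2/?t \<noteq> 0"
  proof
    assume "?t - h2/?t = 0"
    then have "?t^2 - h2 = 0" using t0 by (simp add: field_simps power2_eq_square)
    then show False using cui i by auto
  qed
  have "(?t - h2/?t) * VV (fP h1 ?t) (gP h2 ?t) = 0"
    unfolding gP_def fP_def V_on_param[OF t0] XY_on_curve[OF t0 h1 h2 q0]
    using Uf_root[OF i] by (simp add: Uf_Ue m_def)
  then show ?thesis using tv by simp
qed

lemma cc_zero_on_conic:
  assumes "NN f g = 0" "g \<noteq> 0" "g \<noteq> al" "g \<noteq> be" "phi h1 h2 f g = 0"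
  shows "bipoly cc f g = 0"
  unfolding bipoly_cc beval_Tbi using assms beval_Hbi by simp

lemma cc_vanishes_Pi: "i \<in> {1..8} \<Longrightarrow> bipoly cc (fP h1 (u i)) (gP h2 (u i)) = 0"
proof -
  assume i: "i \<in> {1..8}"
  have t0: "u i \<noteq> 0" using un i by auto
  show ?thesis
    by (rule cc_zero_on_conic) (use cui i phi_curve[OF t0 h1 h2] V_vanishes_at_P[OF i] in
        \<open>auto simp: NN_def al_def be_def q_def\<close>)
qed

lemma cc_vanishes_Pz: "bipoly cc b de = 0"
  by (rule cc_zero_on_conic)
     (use cde cdeal cdebe phi_curve[OF z0 h1 h2] in \<open>auto simp: NN_def al_def be_def de_def b_def q_def\<close>)

lemma fP_h1qz: "fP h1 (h1*q/z) = a" using h1 z0 q0 by (simp add: a_def fP_def field_simps)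

lemma cc_vanishes_Ph1qz: "bipoly cc a ga = 0"
proof -
  have t0: "h1*q/z \<noteq> 0" using h1 q0 z0 by simp
  show ?thesis
    by (rule cc_zero_on_conic)
       (use cga cgaal cgabe phi_curve[OF t0 h1 h2] fP_h1qz in \<open>auto simp: NN_def al_def be_def ga_def q_def\<close>)
qed

text \<open>At the points Q(z), Q(z/q) the contribution of the third term of L1 cancels that of
  the second (resp. first) term, by the defining ratio of Q.\<close>
lemma cc_vanishes_Qz:
  assumes g: "(g - de)/(g - be) = y2/y1"
  shows "bipoly cc b g = 0"
proof -
  have gbe: "g \<noteq> be" using g y2n y1n by auto
  have e: "y1*(g-de) = y2*(g-be)" using g gbe y1n by (simp add: field_simps)
  then have "g = (de*y1 - be*y2)/(y1-y2)" using y12 by (simp add: field_simps; algebra)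
  then have g0: "g \<noteq> 0" "g \<noteq> al" using cQ1 cQ1a by (simp_all add: de_def be_def al_def q_def)
  have "bipoly cc b g = y2*(phi h1 h2 b g*(b-a)*B) + y1*(-(phi h1 h2 b g*(b-a)*B*g*(g-al)*(g-de))/(g*(g-al)*(g-be)))"
    unfolding bipoly_cc beval_Tbi beval_Hbi[OF g0 gbe] NN_def by (simp add: mult_ac)
  also have "\<dots> = phi h1 h2 b g*(b-a)*B*(y2 - y1*(g-de)/(g-be))"
    by (rule Q_point_factor) (use g0 gbe in auto)
  also have "\<dots> = 0" using e gbe by simp
  finally show ?thesis .
qed

lemma cc_vanishes_Qzq:
  assumes g: "(g - al)/(g - ga) = y1/y0"
  shows "bipoly cc a g = 0"
proof -
  have gga: "g \<noteq> ga" using g y0n y1n by auto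
  have e: "y0*(g-al) = y1*(g-ga)" using g gga y0n by (simp add: field_simps)
  have gal: "g \<noteq> al" using e y1n gga by auto
  have "g = (al*y0 - ga*y1)/(y0-y1)" using e y01 by (simp add: field_simps; algebra)
  then have g0: "g \<noteq> 0" "g \<noteq> be" using cQ2 cQ2b by (simp_all add: ga_def be_def al_def q_def)
  have "bipoly cc a g = y0*(phi h1 h2 a g*(a-b)*A) + y1*(-(phi h1 h2 a g*(a-b)*A*g*(g-be)*(g-ga))/(g*(g-be)*(g-al)))"
    unfolding bipoly_cc beval_Tbi beval_Hbi[OF g0(1) gal g0(2)] NN_def by (simp add: mult_ac)
  also have "\<dots> = phi h1 h2 a g*(a-b)*A*(y0 - y1*(g-ga)/(g-al))"
    by (rule Q_point_factor) (use g0 gal in auto)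
  also have "\<dots> = 0" using e gal by (simp add: eq_divide_eq)
  finally show ?thesis .
qed

lemma through: "through12 h1 h2 u z y0 y1 y2 cc"
proof -
  have "gP h2 (h1/(z/q)) = ga" by (simp add: ga_def)
  then show ?thesis
    unfolding through12_def Let_def q_def[symmetric]
    using cc_vanishes_Pi cc_vanishes_Pz cc_vanishes_Ph1qz cc_vanishes_Qz cc_vanishes_Qzq fP_h1qz
    by (simp add: a_def[symmetric] b_def[symmetric] de_def[symmetric] be_def[symmetric]
        al_def[symmetric] ga_def[symmetric])
qed

subsection \<open>Uniqueness\<close>

text \<open>The ten points of the conic phi = 0 among the twelve.\<close>
definition "Rpts = u ` {1..8} \<union> {z, h1*q/z}"

lemma card_Rpts: "card Rpts = 10"
proof -
  have inj: "inj_on u {1..8}" using cinj by (auto simp: inj_on_def)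
  have c8: "card (u ` {1..8}) = 8" using card_image[OF inj] by simp
  have zn: "z \<notin> u ` {1..8}" using cui by auto
  have qn: "h1*q/z \<notin> u ` {1..8}" using cui by (auto simp: q_def)
  have zq: "z \<noteq> h1*q/z"
  proof
    assume "z = h1*q/z"
    then have "z^2 - h1*q = 0" using z0 by (simp add: field_simps power2_eq_square)
    then show False using czq by (simp add: q_def)
  qed
  show ?thesis unfolding Rpts_def using c8 zn qn zq by (simp add: card_insert_if)
qed

lemma zero_notin_Rpts: "0 \<notin> Rpts"
  using un h1 q0 z0 by (auto simp: Rpts_def)

lemma Rpts_vanish:
  assumes "through12 h1 h2 u z y0 y1 y2 d" "r \<in> Rpts"
  shows "bipoly d (fP h1 r) (gP h2 r) = 0"
  using assms unfolding through12_def Let_def q_def[symmetric] Rpts_def by auto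

text \<open>The g-coordinates of the points Q(z) and Q(z/q).\<close>
definition "gQz = (de*y1 - be*y2)/(y1-y2)"
definition "gQzq = (al*y0 - ga*y1)/(y0-y1)"

lemma gQz_diffs: "gQz - de = y2*(de-be)/(y1-y2)" "gQz - be = y1*(de-be)/(y1-y2)"
proof -
  have nz: "y1 - y2 \<noteq> 0" using y12 by simp
  show "gQz - de = y2*(de-be)/(y1-y2)" unfolding gQz_def using nz by (simp add: field_simps; algebra)
  show "gQz - be = y1*(de-be)/(y1-y2)" unfolding gQz_def using nz by (simp add: field_simps; algebra)
qed

lemma gQzq_diffs: "gQzq - al = y1*(al-ga)/(y0-y1)" "gQzq - ga = y0*(al-ga)/(y0-y1)"
proof -
  have nz: "y0 - y1 \<noteq> 0" using y01 by simp
  show "gQzq - al = y1*(al-ga)/(y0-y1)" unfolding gQzq_def using nz by (simp add: field_simps; algebra)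
  show "gQzq - ga = y0*(al-ga)/(y0-y1)" unfolding gQzq_def using nz by (simp add: field_simps; algebra)
qed

lemma de_ne_be: "de \<noteq> be" using cdebe by (simp add: de_def be_def)
lemma al_ne_ga: "al \<noteq> ga" using cgaal by (simp add: al_def ga_def q_def)

lemma ratio_cancel:
  fixes x y c d :: complex
  assumes "c \<noteq> 0" "d \<noteq> 0" "y \<noteq> 0"
  shows "(x*c/d)/(y*c/d) = x/y"
  using assms by (simp add: field_simps)

lemma Q_points_vanish:
  assumes thr: "through12 h1 h2 u z y0 y1 y2 d"
  shows "bipoly d b gQz = 0" "bipoly d a gQzq = 0"
proof -
  have "(gQz - gP h2 z)/(gQz - gP h2 (h1/z)) = y2/y1"
    unfolding de_def[symmetric] be_def[symmetric] gQz_diffs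
    by (rule ratio_cancel) (use de_ne_be y12 y1n in auto)
  then show "bipoly d b gQz = 0"
    using thr unfolding through12_def Let_def q_def[symmetric] b_def by auto
  have gg: "gP h2 (h1/(z/q)) = ga" by (simp add: ga_def)
  have "(gQzq - gP h2 (z/q))/(gQzq - gP h2 (h1/(z/q))) = y1/y0"
    unfolding gg al_def[symmetric] gQzq_diffs
    by (rule ratio_cancel) (use al_ne_ga y01 y0n in auto)
  then show "bipoly d a gQzq = 0"
    using thr unfolding through12_def Let_def q_def[symmetric] a_def by auto
qed

lemma Q_points_off_conic: "phi h1 h2 b gQz \<noteq> 0" "phi h1 h2 a gQzq \<noteq> 0"
proof -
  have zq0: "z/q \<noteq> 0" using z0 q0 by simp
  show "phi h1 h2 b gQz \<noteq> 0"
    unfolding b_def phi_factor_g[OF z0 h1 h2] de_def[symmetric] be_def[symmetric] gQz_diffs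
    using de_ne_be y12 y1n y2n h2 by simp
  have gg: "gP h2 (h1/(z/q)) = ga" by (simp add: ga_def)
  show "phi h1 h2 a gQzq \<noteq> 0"
    unfolding a_def phi_factor_g[OF zq0 h1 h2] gg al_def[symmetric] gQzq_diffs
    using al_ne_ga y01 y1n y0n h2 by simp
qed

lemma unique:
  assumes box: "in_box32 d" and thr: "through12 h1 h2 u z y0 y1 y2 d"
  shows "\<exists>s. \<forall>i j. d i j = s * cc i j"
proof -
  define s where "s = d 3 2 / cc 3 2"
  define e where "e i j = d i j - s * cc i j" for i j
  have e32: "e 3 2 = 0" using cc_top_nonzero by (simp add: e_def s_def)
  have bip_e: "bipoly e f g = bipoly d f g - s * bipoly cc f g" for f g
    unfolding bipoly_def e_def by (simp add: sum_subtractf sum_distrib_left algebra_simps)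
  have ten: "\<forall>r\<in>Rpts. bipoly e (fP h1 r) (gP h2 r) = 0"
    using Rpts_vanish[OF thr] Rpts_vanish[OF through] by (simp add: bip_e)
  have "bipoly e (fP h1 t) (gP h2 t) = 0" if "t \<noteq> 0" for t
    using vanish_on_conic[of e Rpts h1 h2 t] e32 card_Rpts zero_notin_Rpts ten that by simp
  then have fac: "bipoly e f g = h2 * Ek e 2 f * phi h1 h2 f g" if "f^2 \<noteq> 4*h1" for f g
    using conic_factor[OF h1 h2 h12 _ that] by blast
  have "Ek e 2 b = 0"
    using fac[of b gQz] Q_points_vanish[OF thr] Q_points_vanish[OF through]
      Q_points_off_conic h2 cb4 by (simp add: bip_e b_def)
  moreover have "Ek e 2 a = 0"
    using fac[of a gQzq] Q_points_vanish[OF thr] Q_points_vanish[OF through]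
      Q_points_off_conic h2 ca4 by (simp add: bip_e a_def q_def)
  moreover have "a \<noteq> b" using cab by (simp add: a_def b_def q_def)
  ultimately have "e i j = 0" if "i \<le> 3" "j \<le> 2" for i j
    using conic_factor_zero[OF h1 h2 e32 fac] that by blast
  moreover have "in_box32 e" using box in_box_coeff_grid[of Tbi]
    by (simp add: in_box32_def e_def cc_def)
  ultimately have "e i j = 0" for i j unfolding in_box32_def by (meson not_le)
  then show ?thesis by (intro exI[of _ s]) (simp add: e_def)
qed

lemma main:
  "\<exists>c. in_box32 c \<and> (\<exists>j. c 3 j \<noteq> 0) \<and> (\<exists>i. c i 2 \<noteq> 0)
          \<and> (\<forall>f g. g \<noteq> 0 \<and> phi h1 h2 f g \<noteq> 0
                   \<and> f \<noteq> fP h1 (z / qpar h1 h2 u) \<and> f \<noteq> fP h1 z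
                   \<and> g \<noteq> gP h2 (z / qpar h1 h2 u) \<and> g \<noteq> gP h2 (h1 / z)
                   \<longrightarrow> Fcurve h1 h2 u z y0 y1 y2 f g = bipoly c f g)
          \<and> through12 h1 h2 u z y0 y1 y2 c
          \<and> (\<forall>d. in_box32 d \<and> through12 h1 h2 u z y0 y1 y2 d
                 \<longrightarrow> (\<exists>s. \<forall>i j. d i j = s * c i j))"
proof (intro exI[of _ cc] conjI allI impI)
  show "in_box32 cc" unfolding cc_def by (rule in_box_coeff_grid)
  show "\<exists>j. cc 3 j \<noteq> 0" using cc_top_nonzero by blast
  show "\<exists>i. cc i 2 \<noteq> 0" using cc_top_nonzero by blast
  show "through12 h1 h2 u z y0 y1 y2 cc" by (rule through)
next
  fix f g
  assume "g \<noteq> 0 \<and> phi h1 h2 f g \<noteq> 0 \<and> f \<noteq> fP h1 (z / qpar h1 h2 u) \<and> f \<noteq> fP h1 z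
          \<and> g \<noteq> gP h2 (z / qpar h1 h2 u) \<and> g \<noteq> gP h2 (h1 / z)"
  then show "Fcurve h1 h2 u z y0 y1 y2 f g = bipoly cc f g"
    by (intro Fcurve_eq) (auto simp: a_def b_def al_def be_def q_def)
next
  fix d
  assume "in_box32 d \<and> through12 h1 h2 u z y0 y1 y2 d"
  then show "\<exists>s. \<forall>i j. d i j = s * cc i j" using unique by blast
qed

end

section \<open>The genericity condition\<close>

lemma pf_sub:
  assumes p: "polyfun n p" and r: "polyfun n r" shows "polyfun n (\<lambda>x. p x - r x)"
proof -
  have c: "polyfun n (\<lambda>x. (-1::complex))" by (rule pf_const)
  from pf_add[OF p pf_mult[OF c r]] show ?thesis by simp
qed
lemma pf_pow: "polyfun n p \<Longrightarrow> polyfun n (\<lambda>x. p x ^ k)"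
proof (induct k)
  case 0 then show ?case using pf_const[of n 1] by simp
next
  case (Suc k) then show ?case using pf_mult[of n p "\<lambda>x. p x ^ k"] by simp
qed
lemma pf_prod: "finite S \<Longrightarrow> (\<forall>i\<in>S. polyfun n (p i)) \<Longrightarrow> polyfun n (\<lambda>x. \<Prod>i\<in>S. p i x)"
proof (induct S rule: finite_induct)
  case empty then show ?case using pf_const[of n 1] by simp
next
  case (insert a F)
  then show ?case using pf_mult[of n "p a" "\<lambda>x. \<Prod>i\<in>F. p i x"] by simp
qed

text \<open>The nondegeneracy conditions: Dbase collects the factors involving only h1, h2, z,
  Y and S = u1 ... u8; Dui those involving one u i; then the u i are distinct.\<close>
definition Dbase :: "complex \<Rightarrow> complex \<Rightarrow> complex \<Rightarrow> complex \<Rightarrow> complex \<Rightarrow> complex \<Rightarrow> complex \<Rightarrow> complex" where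
  "Dbase H1 H2 S Z Y0 Y1 Y2 = H1*H2*(H1-H2)*Z*Y0*Y1*Y2*(Y0-Y1)*(Y1-Y2)*S
    *(Z^2*S^2-H1^5*H2^4)*(Z^2-H1)*(Z^2*S-H1^3*H2^2)
    *(Z^2*S^2-H1^4*H2^5)*(H1^2-H2*Z^2)*(Z^2*S^2+H1^4*H2^5)*(H1^2+H2*Z^2)
    *(Z^2*S^2+H1^4*H2^5-H1^3*H2^2*S-H1*H2^3*Z^2*S)*(Z^2+H2)
    *(H1^2*H2^2*S*(Z^2+H2)-Z^2*S^2-H1^4*H2^5)*(H1*(Z^2+H2)-(H1^2+H2*Z^2))
    *(H1^6*H2^4+H2*Z^2*S^2)*(H1^6*H2^4+H2*Z^2*S^2-H1*Z^2*S^2-H1^5*H2^5)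
    *(H1^6*H2^4+H2*Z^2*S^2-H1^2*H2^2*S*(H1^2+H2*Z^2))
    *(Z^2*S^2+H1^5*H2^4-H1^2*H2^2*Z^2*S-H1^3*H2^2*S)
    *(H1*(Z^2+H2)*Y1-(H1^2+H2*Z^2)*Y2)
    *(H1*H2^2*S*(H1*(Z^2+H2)*Y1-(H1^2+H2*Z^2)*Y2)-(Z^2*S^2+H1^4*H2^5)*(Y1-Y2))
    *(H1*(Z^2*S^2+H1^4*H2^5)*Y0-(H1^6*H2^4+H2*Z^2*S^2)*Y1)
    *(H1*(Z^2*S^2+H1^4*H2^5)*Y0-(H1^6*H2^4+H2*Z^2*S^2)*Y1-H1^2*H2^2*S*(H1^2+H2*Z^2)*(Y0-Y1))"

definition Dui :: "complex \<Rightarrow> complex \<Rightarrow> complex \<Rightarrow> complex \<Rightarrow> complex \<Rightarrow> complex" where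
  "Dui H1 H2 S Z U = U*(U^2-H2)*(U^2+H2)*(H1^2*H2^2*Z*S*(U^2+H2)-U*(Z^2*S^2+H1^4*H2^5))
    *(H1*Z*(U^2+H2)-U*(H1^2+H2*Z^2))*(U-Z)*(U*Z*S-H1^3*H2^2)"

definition Dexpr :: "complex \<Rightarrow> complex \<Rightarrow> (nat \<Rightarrow> complex) \<Rightarrow> complex \<Rightarrow> complex \<Rightarrow> complex \<Rightarrow> complex \<Rightarrow> complex" where
  "Dexpr h1 h2 v z y0 y1 y2 = Dbase h1 h2 (\<Prod>i\<in>{1..8}. v i) z y0 y1 y2
     * (\<Prod>i\<in>{1..8}. Dui h1 h2 (\<Prod>i\<in>{1..8}. v i) z (v i))
     * (\<Prod>i\<in>{1..8}. \<Prod>j\<in>{Suc i..8}. (v i - v j))"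

lemma Dexpr_cong: "(\<And>i. i \<in> {1..8} \<Longrightarrow> v i = w i) \<Longrightarrow> Dexpr h1 h2 v z y0 y1 y2 = Dexpr h1 h2 w z y0 y1 y2"
proof -
  assume a: "\<And>i. i \<in> {1..8} \<Longrightarrow> v i = w i"
  have p: "(\<Prod>i\<in>{1..8}. v i) = (\<Prod>i\<in>{1..8}. w i)" using a by (rule prod.cong[OF refl])
  show ?thesis unfolding Dexpr_def p
    by (intro arg_cong2[where f="(*)"] arg_cong[where f="(*) _"] prod.cong refl) (auto simp: a)
qed

definition Dfun :: "(nat \<Rightarrow> complex) \<Rightarrow> complex" where
  "Dfun x = Dexpr (x 0) (x 1) (\<lambda>i. x (Suc i)) (x 10) (x 11) (x 12) (x 13)"

lemma polyfun_D: "polyfun 14 Dfun"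
proof -
  have "polyfun 14 (\<lambda>x. Dexpr (x 0) (x 1) (\<lambda>i. x (Suc i)) (x 10) (x 11) (x 12) (x 13))"
    unfolding Dexpr_def Dbase_def Dui_def
    by (intro pf_mult pf_sub pf_add pf_pow pf_const pf_prod ballI finite_atLeastAtMost pf_var) auto
  then show ?thesis unfolding Dfun_def[abs_def] .
qed

lemma nonzero_factor: "(P::complex) = E * M \<Longrightarrow> P \<noteq> 0 \<Longrightarrow> E \<noteq> 0" by auto

text \<open>Each nondegeneracy condition, cleared of denominators, is a factor of D.\<close>
context
  fixes h1 h2 z S Q :: complex
begin

lemma nondeg_czq:
  assumes "Q*S = h1^2*h2^2"
  shows "z^2*S-h1^3*h2^2 = (z^2 - h1*Q)*(S)"
  using assms by algebra

lemma nondeg_czq2: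
  assumes "Q*S = h1^2*h2^2"
  shows "z^2*S^2-h1^5*h2^4 = (z^2 - h1*Q^2)*(S^2)"
  using assms by algebra

lemma nondeg_cta:
  assumes "Q*S = h1^2*h2^2" "W*Q = z"
  shows "z^2*S^2-h1^4*h2^5 = (W^2 - h2)*(h1^4*h2^4)"
  using assms by algebra

lemma nondeg_ctb:
  assumes "V1*z = h1"
  shows "h1^2-h2*z^2 = (V1^2 - h2)*(z^2)"
proof -
  have "(V1^2 - h2)*(z^2) = (V1*z)^2 - h2*z^2" by algebra
  then show ?thesis using assms by simp
qed

lemma nondeg_calbe:
  assumes "A1*(h1^2*h2^2*z*S) = z^2*S^2+h1^4*h2^5" "B1*(h1*z) = h1^2+h2*z^2"
  shows "z^2*S^2+h1^4*h2^5-h1^3*h2^2*S-h1*h2^3*z^2*S = (A1 - B1)*(h1^2*h2^2*z*S)"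
  using assms by algebra

lemma nondeg_cdeal:
  assumes "D1*z = z^2+h2" "A1*(h1^2*h2^2*z*S) = z^2*S^2+h1^4*h2^5"
  shows "h1^2*h2^2*S*(z^2+h2)-z^2*S^2-h1^4*h2^5 = (D1 - A1)*(h1^2*h2^2*z*S)"
  using assms by algebra

lemma nondeg_cdebe:
  assumes "D1*z = z^2+h2" "B1*(h1*z) = h1^2+h2*z^2"
  shows "h1*(z^2+h2)-(h1^2+h2*z^2) = (D1 - B1)*(h1*z)"
  using assms by algebra

lemma nondeg_cgaal:
  assumes "G1*(h1^3*h2^2*z*S) = h1^6*h2^4+h2*z^2*S^2" "A1*(h1^2*h2^2*z*S) = z^2*S^2+h1^4*h2^5"
  shows "h1^6*h2^4+h2*z^2*S^2-h1*z^2*S^2-h1^5*h2^5 = (G1 - A1)*(h1^3*h2^2*z*S)"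
  using assms by algebra

lemma nondeg_cgabe:
  assumes "G1*(h1^3*h2^2*z*S) = h1^6*h2^4+h2*z^2*S^2" "B1*(h1*z) = h1^2+h2*z^2"
  shows "h1^6*h2^4+h2*z^2*S^2-h1^2*h2^2*S*(h1^2+h2*z^2) = (G1 - B1)*(h1^3*h2^2*z*S)"
  using assms by algebra

lemma nondeg_cab:
  assumes "FA*(h1^2*h2^2*z*S) = z^2*S^2+h1^5*h2^4" "FB*z = z^2+h1"
  shows "z^2*S^2+h1^5*h2^4-h1^2*h2^2*z^2*S-h1^3*h2^2*S = (FA - FB)*(h1^2*h2^2*z*S)"
  using assms by algebra

lemma nondeg_ca4:
  assumes "FA*(h1^2*h2^2*z*S) = z^2*S^2+h1^5*h2^4"
  shows "(z^2*S^2-h1^5*h2^4)^2 = (FA^2 - 4*h1)*((h1^2*h2^2*z*S)^2)"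
  using assms by algebra

lemma nondeg_cb4:
  assumes "FB*z = z^2+h1"
  shows "(z^2-h1)^2 = (FB^2 - 4*h1)*(z^2)"
  using assms by algebra

lemma nondeg_cQ1:
  assumes "T1*(y1-y2) = D1*y1 - B1*y2" "D1*z = z^2+h2" "B1*(h1*z) = h1^2+h2*z^2"
  shows "h1*(z^2+h2)*y1-(h1^2+h2*z^2)*y2 = (T1)*(h1*z*(y1-y2))"
  using assms by algebra

lemma nondeg_cQ1a:
  assumes "T1*(y1-y2) = D1*y1 - B1*y2" "D1*z = z^2+h2" "B1*(h1*z) = h1^2+h2*z^2" "A1*(h1^2*h2^2*z*S) = z^2*S^2+h1^4*h2^5"
  shows "h1*h2^2*S*(h1*(z^2+h2)*y1-(h1^2+h2*z^2)*y2)-(z^2*S^2+h1^4*h2^5)*(y1-y2) = (T1 - A1)*(h1^2*h2^2*z*S*(y1-y2))"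
  using assms by algebra

lemma nondeg_cQ2:
  assumes "T2*(y0-y1) = A1*y0 - G1*y1" "A1*(h1^2*h2^2*z*S) = z^2*S^2+h1^4*h2^5" "G1*(h1^3*h2^2*z*S) = h1^6*h2^4+h2*z^2*S^2"
  shows "h1*(z^2*S^2+h1^4*h2^5)*y0-(h1^6*h2^4+h2*z^2*S^2)*y1 = (T2)*(h1^3*h2^2*z*S*(y0-y1))"
  using assms by algebra

lemma nondeg_cQ2b:
  assumes "T2*(y0-y1) = A1*y0 - G1*y1" "A1*(h1^2*h2^2*z*S) = z^2*S^2+h1^4*h2^5" "G1*(h1^3*h2^2*z*S) = h1^6*h2^4+h2*z^2*S^2" "B1*(h1*z) = h1^2+h2*z^2"
  shows "h1*(z^2*S^2+h1^4*h2^5)*y0-(h1^6*h2^4+h2*z^2*S^2)*y1-h1^2*h2^2*S*(h1^2+h2*z^2)*(y0-y1) = (T2 - B1)*(h1^3*h2^2*z*S*(y0-y1))"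
  using assms by algebra

lemma nondeg_pc:
  assumes "GU*U = U^2+h2" "A1*(h1^2*h2^2*z*S) = z^2*S^2+h1^4*h2^5"
  shows "h1^2*h2^2*z*S*(U^2+h2)-U*(z^2*S^2+h1^4*h2^5) = (GU - A1)*(h1^2*h2^2*z*S*U)"
  using assms by algebra

lemma nondeg_pd:
  assumes "GU*U = U^2+h2" "B1*(h1*z) = h1^2+h2*z^2"
  shows "h1*z*(U^2+h2)-U*(h1^2+h2*z^2) = (GU - B1)*(h1*z*U)"
  using assms by algebra

lemma nondeg_pf:
  assumes "R*z = h1*Q" "Q*S = h1^2*h2^2"
  shows "U*z*S-h1^3*h2^2 = (U - R)*(z*S)"
  using assms by algebra

end

lemma special_coordinates:
  assumes h1: "h1 \<noteq> 0" and h2: "h2 \<noteq> 0" and z0: "z \<noteq> 0" and S0: "S \<noteq> 0"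
    and qe: "Q = h1^2*h2^2/S"
  shows "gP h2 (z/Q)*(h1^2*h2^2*z*S) = z^2*S^2+h1^4*h2^5"
    and "gP h2 (h1/z)*(h1*z) = h1^2+h2*z^2"
    and "gP h2 z*z = z^2+h2"
    and "gP h2 (h1*Q/z)*(h1^3*h2^2*z*S) = h1^6*h2^4+h2*z^2*S^2"
    and "fP h1 (z/Q)*(h1^2*h2^2*z*S) = z^2*S^2+h1^5*h2^4"
    and "fP h1 z*z = z^2+h1"
proof -
  show "gP h2 (z/Q)*(h1^2*h2^2*z*S) = z^2*S^2+h1^4*h2^5"
    using h1 h2 z0 S0 unfolding gP_def qe by (simp add: field_simps; algebra?)
  show "gP h2 (h1/z)*(h1*z) = h1^2+h2*z^2"
    using h1 z0 unfolding gP_def by (simp add: field_simps power2_eq_square)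
  show "gP h2 z*z = z^2+h2"
    using z0 unfolding gP_def by (simp add: field_simps power2_eq_square)
  show "gP h2 (h1*Q/z)*(h1^3*h2^2*z*S) = h1^6*h2^4+h2*z^2*S^2"
    using h1 h2 z0 S0 unfolding gP_def qe by (simp add: field_simps; algebra?)
  show "fP h1 (z/Q)*(h1^2*h2^2*z*S) = z^2*S^2+h1^5*h2^4"
    using h1 h2 z0 S0 unfolding fP_def qe by (simp add: field_simps; algebra?)
  show "fP h1 z*z = z^2+h1"
    using z0 unfolding fP_def by (simp add: field_simps power2_eq_square)
qed

lemma Dui_conditions:
  assumes D: "Dui h1 h2 S z U \<noteq> 0" and h1: "h1 \<noteq> 0" and h2: "h2 \<noteq> 0" and z0: "z \<noteq> 0"
    and S0: "S \<noteq> 0" and qe: "Q = h1^2*h2^2/S"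
  shows "U^2 - h2 \<noteq> 0 \<and> gP h2 U \<noteq> 0 \<and> gP h2 U \<noteq> gP h2 (z/Q) \<and> gP h2 U \<noteq> gP h2 (h1/z)
       \<and> U \<noteq> z \<and> U \<noteq> h1*Q/z"
proof -
  note bi = D[unfolded Dui_def mult_eq_0_iff de_Morgan_disj]
  note F = special_coordinates[OF h1 h2 z0 S0 qe]
  have FQ: "Q*S = h1^2*h2^2" using S0 by (simp add: qe)
  have FR: "(h1*Q/z)*z = h1*Q" using z0 by simp
  have U0: "U \<noteq> 0" using bi by blast
  have Fu: "gP h2 U*U = U^2 + h2" using U0 unfolding gP_def by (simp add: field_simps power2_eq_square)
  have "U^2 - h2 \<noteq> 0" "U - z \<noteq> 0" using bi by blast+
  moreover have "gP h2 U \<noteq> 0" using Fu bi by auto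
  moreover have "gP h2 U \<noteq> gP h2 (z/Q)" using nonzero_factor[OF nondeg_pc[OF Fu F(1)]] bi by auto
  moreover have "gP h2 U \<noteq> gP h2 (h1/z)" using nonzero_factor[OF nondeg_pd[OF Fu F(2)]] bi by auto
  moreover have "U \<noteq> h1*Q/z" using nonzero_factor[OF nondeg_pf[OF FR FQ]] bi by auto
  ultimately show ?thesis by simp
qed

lemma Dbase_conditions:
  assumes base: "Dbase h1 h2 S z y0 y1 y2 \<noteq> 0" and qe: "Q = h1^2*h2^2/S"
  shows "h1 \<noteq> 0 \<and> h2 \<noteq> 0 \<and> h1 \<noteq> h2 \<and> z \<noteq> 0 \<and> y0 \<noteq> 0 \<and> y1 \<noteq> 0 \<and> y2 \<noteq> 0
    \<and> y0 \<noteq> y1 \<and> y1 \<noteq> y2 \<and> S \<noteq> 0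
    \<and> z^2 - h1*Q^2 \<noteq> 0 \<and> z^2 - h1 \<noteq> 0 \<and> z^2 - h1*Q \<noteq> 0
    \<and> (z/Q)^2 - h2 \<noteq> 0 \<and> (h1/z)^2 - h2 \<noteq> 0
    \<and> gP h2 (z/Q) \<noteq> 0 \<and> gP h2 (h1/z) \<noteq> 0 \<and> gP h2 (z/Q) \<noteq> gP h2 (h1/z)
    \<and> gP h2 z \<noteq> 0 \<and> gP h2 z \<noteq> gP h2 (z/Q) \<and> gP h2 z \<noteq> gP h2 (h1/z)
    \<and> gP h2 (h1*Q/z) \<noteq> 0 \<and> gP h2 (h1*Q/z) \<noteq> gP h2 (z/Q) \<and> gP h2 (h1*Q/z) \<noteq> gP h2 (h1/z)
    \<and> fP h1 (z/Q) \<noteq> fP h1 z \<and> (fP h1 (z/Q))^2 - 4*h1 \<noteq> 0 \<and> (fP h1 z)^2 - 4*h1 \<noteq> 0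
    \<and> (gP h2 z*y1 - gP h2 (h1/z)*y2)/(y1-y2) \<noteq> 0
    \<and> (gP h2 z*y1 - gP h2 (h1/z)*y2)/(y1-y2) \<noteq> gP h2 (z/Q)
    \<and> (gP h2 (z/Q)*y0 - gP h2 (h1*Q/z)*y1)/(y0-y1) \<noteq> 0
    \<and> (gP h2 (z/Q)*y0 - gP h2 (h1*Q/z)*y1)/(y0-y1) \<noteq> gP h2 (h1/z)"
proof -
  note bf = base[unfolded Dbase_def mult_eq_0_iff de_Morgan_disj]
  have h1: "h1 \<noteq> 0" and h2: "h2 \<noteq> 0" and z0: "z \<noteq> 0" and S0: "S \<noteq> 0"
    using bf by blast+
  have FQ: "Q*S = h1^2*h2^2" using S0 by (simp add: qe)
  have FW: "(z/Q)*Q = z" using h1 h2 S0 by (simp add: qe)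
  have FV: "(h1/z)*z = h1" using z0 by simp
  note F = special_coordinates[OF h1 h2 z0 S0 qe]
  have FT1: "((gP h2 z*y1 - gP h2 (h1/z)*y2)/(y1-y2))*(y1-y2) = gP h2 z*y1 - gP h2 (h1/z)*y2"
    using bf by simp
  have FT2: "((gP h2 (z/Q)*y0 - gP h2 (h1*Q/z)*y1)/(y0-y1))*(y0-y1) = gP h2 (z/Q)*y0 - gP h2 (h1*Q/z)*y1"
    using bf by simp
  have "z^2 - h1*Q^2 \<noteq> 0" using nonzero_factor[OF nondeg_czq2[OF FQ]] bf by auto
  moreover have "z^2 - h1*Q \<noteq> 0" using nonzero_factor[OF nondeg_czq[OF FQ]] bf by auto
  moreover have "(z/Q)^2 - h2 \<noteq> 0" using nonzero_factor[OF nondeg_cta[OF FQ FW]] bf by auto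
  moreover have "(h1/z)^2 - h2 \<noteq> 0" using nonzero_factor[OF nondeg_ctb[OF FV]] bf by auto
  moreover have "gP h2 (z/Q) \<noteq> 0" "gP h2 (h1/z) \<noteq> 0" "gP h2 z \<noteq> 0" "gP h2 (h1*Q/z) \<noteq> 0"
    using F bf by auto
  moreover have "gP h2 (z/Q) \<noteq> gP h2 (h1/z)"
    using nonzero_factor[OF nondeg_calbe[OF F(1,2)]] bf by auto
  moreover have "gP h2 z \<noteq> gP h2 (z/Q)" using nonzero_factor[OF nondeg_cdeal[OF F(3,1)]] bf by auto
  moreover have "gP h2 z \<noteq> gP h2 (h1/z)" using nonzero_factor[OF nondeg_cdebe[OF F(3,2)]] bf by auto
  moreover have "gP h2 (h1*Q/z) \<noteq> gP h2 (z/Q)"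
    using nonzero_factor[OF nondeg_cgaal[OF F(4,1)]] bf by auto
  moreover have "gP h2 (h1*Q/z) \<noteq> gP h2 (h1/z)"
    using nonzero_factor[OF nondeg_cgabe[OF F(4,2)]] bf by auto
  moreover have "fP h1 (z/Q) \<noteq> fP h1 z" using nonzero_factor[OF nondeg_cab[OF F(5,6)]] bf by auto
  moreover have "(fP h1 (z/Q))^2 - 4*h1 \<noteq> 0"
    using nonzero_factor[OF nondeg_ca4[OF F(5)]] bf by auto
  moreover have "(fP h1 z)^2 - 4*h1 \<noteq> 0" using nonzero_factor[OF nondeg_cb4[OF F(6)]] bf by auto
  moreover have "(gP h2 z*y1 - gP h2 (h1/z)*y2)/(y1-y2) \<noteq> 0"
    using nonzero_factor[OF nondeg_cQ1[OF FT1 F(3,2)]] bf by auto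
  moreover have "(gP h2 z*y1 - gP h2 (h1/z)*y2)/(y1-y2) \<noteq> gP h2 (z/Q)"
    using nonzero_factor[OF nondeg_cQ1a[OF FT1 F(3,2,1)]] bf by auto
  moreover have "(gP h2 (z/Q)*y0 - gP h2 (h1*Q/z)*y1)/(y0-y1) \<noteq> 0"
    using nonzero_factor[OF nondeg_cQ2[OF FT2 F(1,4)]] bf by auto
  moreover have "(gP h2 (z/Q)*y0 - gP h2 (h1*Q/z)*y1)/(y0-y1) \<noteq> gP h2 (h1/z)"
    using nonzero_factor[OF nondeg_cQ2b[OF FT2 F(1,4,2)]] bf by auto
  moreover have "h1 \<noteq> h2" "y0 \<noteq> y1" "y1 \<noteq> y2" using bf by auto
  ultimately show ?thesis using bf by blast
qed

lemma generic_of_D: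
  assumes D: "Dexpr h1 h2 u z y0 y1 y2 \<noteq> 0"
  shows "generic h1 h2 u z y0 y1 y2"
proof -
  define S where "S = (\<Prod>i\<in>{1..8}. u i)"
  have qe: "qpar h1 h2 u = h1^2*h2^2/S" by (simp add: qpar_def S_def)
  have base: "Dbase h1 h2 S z y0 y1 y2 \<noteq> 0" using D by (simp add: Dexpr_def S_def)
  note C = Dbase_conditions[OF base qe]
  have h1: "h1 \<noteq> 0" and h2: "h2 \<noteq> 0" and z0: "z \<noteq> 0" and S0: "S \<noteq> 0"
    using C by blast+
  have un: "\<forall>i\<in>{1..8}. u i \<noteq> 0" using S0 by (simp add: S_def)
  have cui: "\<forall>i\<in>{1..8}. (u i)^2 - h2 \<noteq> 0 \<and> gP h2 (u i) \<noteq> 0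
       \<and> gP h2 (u i) \<noteq> gP h2 (z/qpar h1 h2 u) \<and> gP h2 (u i) \<noteq> gP h2 (h1/z)
       \<and> u i \<noteq> z \<and> u i \<noteq> h1*qpar h1 h2 u/z"
  proof
    fix i assume "i \<in> {1..8::nat}"
    then have "Dui h1 h2 S z (u i) \<noteq> 0" using D by (simp add: Dexpr_def S_def)
    then show "(u i)^2 - h2 \<noteq> 0 \<and> gP h2 (u i) \<noteq> 0
       \<and> gP h2 (u i) \<noteq> gP h2 (z/qpar h1 h2 u) \<and> gP h2 (u i) \<noteq> gP h2 (h1/z)
       \<and> u i \<noteq> z \<and> u i \<noteq> h1*qpar h1 h2 u/z"
      by (rule Dui_conditions[OF _ h1 h2 z0 S0 qe])
  qed
  have pr: "u i \<noteq> u j" if "i \<in> {1..8}" "j \<in> {Suc i..8}" for i j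
    using D that by (simp add: Dexpr_def)
  have cinj: "\<forall>i\<in>{1..8}. \<forall>j\<in>{1..8}. i \<noteq> j \<longrightarrow> u i \<noteq> u j"
  proof (intro ballI impI)
    fix i j :: nat assume i: "i \<in> {1..8}" and j: "j \<in> {1..8}" and ij: "i \<noteq> j"
    show "u i \<noteq> u j"
    proof (cases "i < j")
      case True then show ?thesis using pr[OF i, of j] j by auto
    next
      case False then show ?thesis using pr[OF j, of i] i ij by auto
    qed
  qed
  show ?thesis unfolding generic_def using C un cui cinj by blast
qed

lemma set8: "{1..8::nat} = {1,2,3,4,5,6,7,8}" by (auto simp: numeral_eq_Suc)
lemma S_val: "(\<Prod>i\<in>{1..8::nat}. (of_nat i + 1 :: complex)) = 362880"
  unfolding set8 by simp

lemma D_nonzero: "Dexpr 3 2 (\<lambda>i. of_nat i + 1) (-3) 5 3 (-1) \<noteq> 0"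
proof -
  have b: "Dbase 3 2 362880 (-3) 5 3 (-1) \<noteq> 0" by (simp add: Dbase_def)
  have p: "\<forall>i\<in>{1..8::nat}. Dui 3 2 362880 (-3) (of_nat i + 1) \<noteq> 0"
    unfolding set8 by (simp add: Dui_def)
  have q: "(\<Prod>i\<in>{1..8::nat}. \<Prod>j\<in>{Suc i..8}. ((of_nat i + 1 :: complex) - (of_nat j + 1))) \<noteq> 0"
  proof -
    have "(of_nat i + 1 :: complex) - (of_nat j + 1) \<noteq> 0" if "j \<in> {Suc i..8}" for i j :: nat
      using that by simp
    then show ?thesis by (simp add: prod_zero_iff)
  qed
  show ?thesis unfolding Dexpr_def S_val using b p q by (simp add: prod_zero_iff)
qed

lemma Dfun_pv: "Dfun (param_vec h1 h2 u z y0 y1 y2) = Dexpr h1 h2 u z y0 y1 y2"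
proof -
  have "Dfun (param_vec h1 h2 u z y0 y1 y2) = Dexpr h1 h2 (\<lambda>i. param_vec h1 h2 u z y0 y1 y2 (Suc i)) z y0 y1 y2"
    unfolding Dfun_def by (simp add: param_vec_def)
  also have "\<dots> = Dexpr h1 h2 u z y0 y1 y2"
    by (rule Dexpr_cong) (auto simp: param_vec_def)
  finally show ?thesis .
qed

theorem proposition1:
  "\<exists>D. polyfun 14 D \<and> (\<exists>x. D x \<noteq> 0) \<and>
    (\<forall>h1 h2 (u :: nat \<Rightarrow> complex) z y0 y1 y2.
       D (param_vec h1 h2 u z y0 y1 y2) \<noteq> 0 \<longrightarrow>
       (\<exists>c. in_box32 c \<and> (\<exists>j. c 3 j \<noteq> 0) \<and> (\<exists>i. c i 2 \<noteq> 0)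
          \<and> (\<forall>f g. g \<noteq> 0 \<and> phi h1 h2 f g \<noteq> 0
                   \<and> f \<noteq> fP h1 (z / qpar h1 h2 u) \<and> f \<noteq> fP h1 z
                   \<and> g \<noteq> gP h2 (z / qpar h1 h2 u) \<and> g \<noteq> gP h2 (h1 / z)
                   \<longrightarrow> Fcurve h1 h2 u z y0 y1 y2 f g = bipoly c f g)
          \<and> through12 h1 h2 u z y0 y1 y2 c
          \<and> (\<forall>d. in_box32 d \<and> through12 h1 h2 u z y0 y1 y2 d
                 \<longrightarrow> (\<exists>s. \<forall>i j. d i j = s * c i j))))"
proof (intro exI[of _ Dfun] conjI allI impI)
  show "polyfun 14 Dfun" by (rule polyfun_D)
  show "\<exists>x. Dfun x \<noteq> 0"
    using D_nonzero Dfun_pv[of 3 2 "\<lambda>i. of_nat i + 1" "-3" 5 3 "-1"] by metis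
  fix h1 h2 :: complex and u :: "nat \<Rightarrow> complex" and z y0 y1 y2 :: complex
  assume "Dfun (param_vec h1 h2 u z y0 y1 y2) \<noteq> 0"
  then have "generic h1 h2 u z y0 y1 y2" using generic_of_D Dfun_pv by metis
  then show "\<exists>c. in_box32 c \<and> (\<exists>j. c 3 j \<noteq> 0) \<and> (\<exists>i. c i 2 \<noteq> 0)
          \<and> (\<forall>f g. g \<noteq> 0 \<and> phi h1 h2 f g \<noteq> 0
                   \<and> f \<noteq> fP h1 (z / qpar h1 h2 u) \<and> f \<noteq> fP h1 z
                   \<and> g \<noteq> gP h2 (z / qpar h1 h2 u) \<and> g \<noteq> gP h2 (h1 / z)
                   \<longrightarrow> Fcurve h1 h2 u z y0 y1 y2 f g = bipoly c f g)
          \<and> through12 h1 h2 u z y0 y1 y2 c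
          \<and> (\<forall>d. in_box32 d \<and> through12 h1 h2 u z y0 y1 y2 d
                 \<longrightarrow> (\<exists>s. \<forall>i j. d i j = s * c i j))"
    by (rule generic.main)
qed

end
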